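(* Let $(\Omega,d)$ be a noncomplete $L$-quasiconvex metric space which is open in its completion, and let $\mu$ be a Borel measure on $\Omega$ which is globally doubling on $(\Omega,d)$ with doubling constant $C_\mu$. Let $\alpha>0$. Then $\mu^\alpha$ is doubling on $(\Omega,k)$ for $k$-balls of radii at most $\tfrac18$, with doubling constant $4^\alpha C_\mu^m$ where $m=\lceil\log_2 8L\rceil$. Moreover, for every $R_1>0$, $\mu^\alpha$ is doubling on $(\Omega,k)$ for $k$-balls of radii at most $R_1$.
   Context: A metric space is $L$-quasiconvex if any two points $x,y$ can be joined by a curve of length at most $L\,d(x,y)$. Let $\partial\Omega$ be the boundary of $\Omega$ in its completion and $d_\Omega(x)=\operatorname{dist}(x,\partial\Omega)$. The quasihyperbolic metric is $k(x,y)=\inf_\gamma\int_\gamma\frac{ds}{d_\Omega(\gamma(s))}$, the infimum over rectifiable curves in $\Omega$ joining $x$ to $y$; $k$-balls are balls with respect to $k$. For $\alpha>0$, $\mu^\alpha(E)=\int_E d_\Omega(x)^{-\alpha}\,d\mu(x)$. A measure $\nu$ is doubling for balls of radii at most $R$ with constant $C$ if $0<\nu(B(x,2r))\le C\nu(B(x,r))<\infty$ for all $x$ and $0<r\le R$; globally doubling if this holds for all $r>0$. *)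

theory Defs
  imports "HOL-Analysis.Analysis"
begin

text \<open>Setting: the metric space Omega is represented as a subset of a complete metric
space (type class complete_space); its completion is then (isometric to) closure Omega.\<close>

definition bdry_compl :: "'a::metric_space set \<Rightarrow> 'a set" where
  "bdry_compl \<Omega> = closure \<Omega> - \<Omega>"

definition dist_bdry :: "'a::metric_space set \<Rightarrow> 'a \<Rightarrow> real" where
  "dist_bdry \<Omega> x = infdist x (bdry_compl \<Omega>)"

definition curve_length :: "(real \<Rightarrow> 'a::metric_space) \<Rightarrow> real \<Rightarrow> real \<Rightarrow> ennreal" where
  "curve_length g a b =
     (SUP p \<in> {(t, n). t 0 = a \<and> t n = b \<and> (\<forall>i<n. t i \<le> t (Suc i))}.
        ennreal (\<Sum>i<snd p. dist (g (fst p i)) (g (fst p (Suc i)))))"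

definition curve_in :: "'a::metric_space set \<Rightarrow> (real \<Rightarrow> 'a) \<Rightarrow> bool" where
  "curve_in \<Omega> g \<longleftrightarrow> path g \<and> path_image g \<subseteq> \<Omega>"

definition rectifiable :: "(real \<Rightarrow> 'a::metric_space) \<Rightarrow> bool" where
  "rectifiable g \<longleftrightarrow> path g \<and> curve_length g 0 1 < \<infinity>"

definition quasiconvex :: "real \<Rightarrow> 'a::metric_space set \<Rightarrow> bool" where
  "quasiconvex L \<Omega> \<longleftrightarrow>
     (\<forall>x\<in>\<Omega>. \<forall>y\<in>\<Omega>. \<exists>g. curve_in \<Omega> g \<and> pathstart g = x \<and> pathfinish g = y \<and>
        curve_length g 0 1 \<le> ennreal (L * dist x y))"

definition arclength_fun :: "(real \<Rightarrow> 'a::metric_space) \<Rightarrow> real \<Rightarrow> real" where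
  "arclength_fun g t = enn2real (curve_length g 0 (min t 1))"

definition line_integral :: "('a::metric_space \<Rightarrow> ennreal) \<Rightarrow> (real \<Rightarrow> 'a) \<Rightarrow> ennreal" where
  "line_integral f g = set_nn_integral (interval_measure (arclength_fun g)) {0..1} (\<lambda>t. f (g t))"

definition qh_dist :: "'a::metric_space set \<Rightarrow> 'a \<Rightarrow> 'a \<Rightarrow> ennreal" where
  "qh_dist \<Omega> x y =
     (INF g \<in> {g. curve_in \<Omega> g \<and> rectifiable g \<and> pathstart g = x \<and> pathfinish g = y}.
        line_integral (\<lambda>z. ennreal (1 / dist_bdry \<Omega> z)) g)"

definition qh_ball :: "'a::metric_space set \<Rightarrow> 'a \<Rightarrow> real \<Rightarrow> 'a set" where
  "qh_ball \<Omega> x r = {y \<in> \<Omega>. qh_dist \<Omega> x y < ennreal r}"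

definition doubling_upto ::
  "'a measure \<Rightarrow> 'a set \<Rightarrow> ('a \<Rightarrow> real \<Rightarrow> 'a set) \<Rightarrow> real \<Rightarrow> real \<Rightarrow> bool" where
  "doubling_upto \<nu> \<Omega> B R C \<longleftrightarrow>
     (\<forall>x\<in>\<Omega>. \<forall>r. 0 < r \<and> r \<le> R \<longrightarrow>
        0 < emeasure \<nu> (B x (2 * r)) \<and>
        emeasure \<nu> (B x (2 * r)) \<le> ennreal C * emeasure \<nu> (B x r) \<and>
        emeasure \<nu> (B x r) < \<infinity>)"

definition doubling_global ::
  "'a measure \<Rightarrow> 'a set \<Rightarrow> ('a \<Rightarrow> real \<Rightarrow> 'a set) \<Rightarrow> real \<Rightarrow> bool" where
  "doubling_global \<nu> \<Omega> B C \<longleftrightarrow>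
     (\<forall>x\<in>\<Omega>. \<forall>r. 0 < r \<longrightarrow>
        0 < emeasure \<nu> (B x (2 * r)) \<and>
        emeasure \<nu> (B x (2 * r)) \<le> ennreal C * emeasure \<nu> (B x r) \<and>
        emeasure \<nu> (B x r) < \<infinity>)"

definition d_ball :: "'a::metric_space set \<Rightarrow> 'a \<Rightarrow> real \<Rightarrow> 'a set" where
  "d_ball \<Omega> x r = ball x r \<inter> \<Omega>"

definition weighted_measure :: "'a::metric_space set \<Rightarrow> 'a measure \<Rightarrow> real \<Rightarrow> 'a measure" where
  "weighted_measure \<Omega> \<mu> \<alpha> = density \<mu> (\<lambda>x. ennreal (dist_bdry \<Omega> x powr (- \<alpha>)))"

end

theory Submission
  imports Defs
begin

text \<open>Write d(x) for the distance from x to the boundary. Quasiconvexity puts the metric ball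
  B(x, r d(x)/(2L)) inside the k-ball of radius r \<le> 1 around x. Conversely, if a curve from x has
  quasihyperbolic length below n/2, splitting it where its arc length reaches d(x), 3 d(x), 7 d(x), ...
  shows that its length is below (2^n - 1) d(x); for k-radius r \<le> 1/4 the estimate
  l/(d(x) + l) < r even gives length below 2 r d(x). So the k-ball of radius 2r lies in a metric
  ball of radius comparable to d(x) on which d is comparable to d(x); there mu^alpha is comparable
  to d(x)^(-alpha) mu, and ceil(log2 8L) doublings of mu bridge the inner and the outer metric ball.\<close>

definition partitions :: "real \<Rightarrow> real \<Rightarrow> ((nat \<Rightarrow> real) \<times> nat) set" where
  "partitions a b = {(t, n). t 0 = a \<and> t n = b \<and> (\<forall>i<n. t i \<le> t (Suc i))}"

definition inscribed_sum :: "(real \<Rightarrow> 'a::metric_space) \<Rightarrow> (nat \<Rightarrow> real) \<times> nat \<Rightarrow> real" where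
  "inscribed_sum g p = (\<Sum>i<snd p. dist (g (fst p i)) (g (fst p (Suc i))))"

lemma curve_length_partitions: "curve_length g a b = (SUP p\<in>partitions a b. ennreal (inscribed_sum g p))"
  by (simp add: curve_length_def partitions_def inscribed_sum_def)

lemma inscribed_sum_nonneg: "0 \<le> inscribed_sum g p"
  by (simp add: inscribed_sum_def sum_nonneg)

lemma partitions_mono:
  assumes "(t, n) \<in> partitions a b" "i \<le> j" "j \<le> n"
  shows "t i \<le> t j"
  using assms(2,3)
proof (induction j)
  case 0 then show ?case by simp
next
  case (Suc j)
  show ?case
  proof (cases "i = Suc j")
    case True then show ?thesis by simp
  next
    case False
    then have "t i \<le> t j" using Suc by auto
    also have "t j \<le> t (Suc j)" using assms(1) Suc.prems by (auto simp: partitions_def)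
    finally show ?thesis .
  qed
qed

lemma partitions_range:
  assumes "(t, n) \<in> partitions a b" "i \<le> n"
  shows "a \<le> t i" "t i \<le> b"
  using partitions_mono[OF assms(1), of 0 i] partitions_mono[OF assms(1), of i n] assms
  by (auto simp: partitions_def)

lemma partitions_imp_le: "(t, n) \<in> partitions a b \<Longrightarrow> a \<le> b"
  using partitions_range[of t n a b 0] by auto

lemma inscribed_sum_le_curve_length: "p \<in> partitions a b \<Longrightarrow> ennreal (inscribed_sum g p) \<le> curve_length g a b"
  unfolding curve_length_partitions by (rule SUP_upper)

lemma trivial_partition: "a \<le> b \<Longrightarrow> (\<lambda>i. if i = 0 then a else b, 1) \<in> partitions a b"
  by (auto simp: partitions_def)

lemma dist_le_curve_length:
  assumes "a \<le> b"
  shows "ennreal (dist (g a) (g b)) \<le> curve_length g a b"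
proof -
  have "ennreal (inscribed_sum g (\<lambda>i. if i = 0 then a else b, 1)) \<le> curve_length g a b"
    by (rule inscribed_sum_le_curve_length[OF trivial_partition[OF assms]])
  then show ?thesis by (simp add: inscribed_sum_def)
qed

lemma curve_length_refl: "curve_length g a a = 0"
proof -
  have "inscribed_sum g p = 0" if "p \<in> partitions a a" for p
  proof -
    obtain t n where p: "p = (t, n)" by force
    have "t i = a" if "i \<le> n" for i using partitions_range[of t n a a i] that \<open>p \<in> partitions a a\<close> p by auto
    then show ?thesis by (simp add: inscribed_sum_def p)
  qed
  then have "(SUP p\<in>partitions a a. ennreal (inscribed_sum g p)) = (SUP p\<in>partitions a a. 0)"
    by (intro SUP_cong) auto
  moreover have "partitions a a \<noteq> {}" using trivial_partition[of a a] by blast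
  ultimately show ?thesis unfolding curve_length_partitions by simp
qed

lemma curve_length_empty:
  assumes "b < a" shows "curve_length g a b = 0"
proof -
  have "partitions a b = {}" using partitions_imp_le assms by force
  then show ?thesis unfolding curve_length_partitions by (simp add: bot_ennreal)
qed

lemma dist_le_split:
  fixes g :: "real \<Rightarrow> 'a::metric_space"
  assumes "p \<le> q"
  shows "dist (g p) (g q) \<le> dist (g (min p b)) (g (min q b)) + dist (g (max p b)) (g (max q b))"
proof (cases "q \<le> b")
  case True then show ?thesis using assms by (simp add: min_def max_def)
next
  case False
  show ?thesis
  proof (cases "b \<le> p")
    case True then show ?thesis using assms by (simp add: min_def max_def)
  next
    case False
    then have "min p b = p" "min q b = b" "max p b = b" "max q b = q" using \<open>\<not> q \<le> b\<close> by auto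
    then show ?thesis by (simp add: dist_triangle)
  qed
qed

lemma partitions_min: "(t, n) \<in> partitions a c \<Longrightarrow> a \<le> b \<Longrightarrow> b \<le> c \<Longrightarrow> (\<lambda>i. min (t i) b, n) \<in> partitions a b"
  by (auto simp: partitions_def min_def)

lemma partitions_max: "(t, n) \<in> partitions a c \<Longrightarrow> a \<le> b \<Longrightarrow> b \<le> c \<Longrightarrow> (\<lambda>i. max (t i) b, n) \<in> partitions b c"
  by (auto simp: partitions_def max_def)

lemma inscribed_sum_split:
  assumes "(t, n) \<in> partitions a c"
  shows "inscribed_sum g (t, n) \<le> inscribed_sum g (\<lambda>i. min (t i) b, n) + inscribed_sum g (\<lambda>i. max (t i) b, n)"
  unfolding inscribed_sum_def snd_conv fst_conv sum.distrib[symmetric]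
  by (rule sum_mono, rule dist_le_split) (use assms in \<open>auto simp: partitions_def\<close>)

lemma curve_length_subadditive:
  assumes "a \<le> b" "b \<le> c"
  shows "curve_length g a c \<le> curve_length g a b + curve_length g b c"
  unfolding curve_length_partitions[of g a c]
proof (rule SUP_least)
  fix p assume p: "p \<in> partitions a c"
  obtain t n where pt: "p = (t, n)" by force
  have "ennreal (inscribed_sum g p) \<le>
      ennreal (inscribed_sum g (\<lambda>i. min (t i) b, n) + inscribed_sum g (\<lambda>i. max (t i) b, n))"
    using inscribed_sum_split[of t n a c g b] p pt by (auto intro: ennreal_leI)
  also have "\<dots> = ennreal (inscribed_sum g (\<lambda>i. min (t i) b, n)) + ennreal (inscribed_sum g (\<lambda>i. max (t i) b, n))"
    by (simp add: ennreal_plus inscribed_sum_nonneg)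
  also have "\<dots> \<le> curve_length g a b + curve_length g b c"
    by (intro add_mono inscribed_sum_le_curve_length partitions_min partitions_max) (use p pt assms in auto)
  finally show "ennreal (inscribed_sum g p) \<le> curve_length g a b + curve_length g b c" .
qed

definition partition_concat :: "(nat \<Rightarrow> real) \<times> nat \<Rightarrow> (nat \<Rightarrow> real) \<times> nat \<Rightarrow> (nat \<Rightarrow> real) \<times> nat" where
  "partition_concat p q = (\<lambda>i. if i \<le> snd p then fst p i else fst q (i - snd p), snd p + snd q)"

lemma partition_concat_partitions:
  assumes "p \<in> partitions a b" "q \<in> partitions b c"
  shows "partition_concat p q \<in> partitions a c"
proof -
  obtain t n where p: "p = (t, n)" by force
  obtain s m where q: "q = (s, m)" by force
  have "(if i \<le> n then t i else s (i - n)) \<le> (if Suc i \<le> n then t (Suc i) else s (Suc i - n))"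
    if "i < n + m" for i
  proof (cases "Suc i \<le> n")
    case True then show ?thesis using assms p by (auto simp: partitions_def)
  next
    case False
    show ?thesis
    proof (cases "i = n")
      case True
      then have "s 0 \<le> s (Suc 0)" using assms q that by (auto simp: partitions_def)
      then show ?thesis using True assms p q by (auto simp: partitions_def)
    next
      case False
      then have "i - n < m" "Suc i - n = Suc (i - n)" using \<open>\<not> Suc i \<le> n\<close> that by auto
      then show ?thesis using \<open>\<not> Suc i \<le> n\<close> False assms q by (auto simp: partitions_def)
    qed
  qed
  then show ?thesis
    unfolding partitions_def mem_Collect_eq partition_concat_def p q fst_conv snd_conv case_prod_conv
  proof (intro conjI allI impI)
    show "(if n + m \<le> n then t (n + m) else s (n + m - n)) = c"
      using assms p q by (cases "m = 0") (auto simp: partitions_def)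
  qed (use assms p q in \<open>auto simp: partitions_def\<close>)
qed

lemma inscribed_sum_partition_concat:
  assumes "p \<in> partitions a b" "q \<in> partitions b c"
  shows "inscribed_sum g (partition_concat p q) = inscribed_sum g p + inscribed_sum g q"
proof -
  obtain t n where p: "p = (t, n)" by force
  obtain s m where q: "q = (s, m)" by force
  let ?r = "\<lambda>i. if i \<le> n then t i else s (i - n)"
  have "(\<Sum>i<n + k. dist (g (?r i)) (g (?r (Suc i)))) =
        (\<Sum>i<n. dist (g (t i)) (g (t (Suc i)))) + (\<Sum>i<k. dist (g (s i)) (g (s (Suc i))))" for k
  proof (induction k)
    case 0 then show ?case by simp
  next
    case (Suc k)
    have "?r (n + k) = s k" using assms p q by (auto simp: partitions_def)
    moreover have "?r (Suc (n + k)) = s (Suc k)" by (simp add: Suc_diff_le)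
    ultimately show ?case using Suc by simp
  qed
  note eq = this
  show ?thesis unfolding inscribed_sum_def partition_concat_def p q fst_conv snd_conv by (rule eq[of m])
qed

lemma curve_length_superadditive:
  assumes "a \<le> b" "b \<le> c"
  shows "curve_length g a b + curve_length g b c \<le> curve_length g a c"
proof -
  have ne1: "partitions a b \<noteq> {}" "partitions b c \<noteq> {}" using trivial_partition assms by blast+
  have "curve_length g a b + curve_length g b c =
    (SUP p\<in>partitions a b. SUP q\<in>partitions b c. ennreal (inscribed_sum g p) + ennreal (inscribed_sum g q))"
    unfolding curve_length_partitions
    by (simp add: ennreal_SUP_add_left[symmetric] ennreal_SUP_add_right[symmetric] ne1)
  also have "\<dots> \<le> curve_length g a c"
  proof (intro SUP_least)
    fix p q assume "p \<in> partitions a b" "q \<in> partitions b c"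
    then show "ennreal (inscribed_sum g p) + ennreal (inscribed_sum g q) \<le> curve_length g a c"
      using inscribed_sum_le_curve_length[OF partition_concat_partitions, of p a b q c g]
        inscribed_sum_partition_concat[of p a b q c g]
      by (simp add: ennreal_plus inscribed_sum_nonneg)
  qed
  finally show ?thesis .
qed

lemma curve_length_additive:
  assumes "a \<le> b" "b \<le> c"
  shows "curve_length g a c = curve_length g a b + curve_length g b c"
  using curve_length_subadditive[OF assms] curve_length_superadditive[OF assms] by (rule antisym)

lemma curve_length_mono_right:
  assumes "a \<le> b" "b \<le> c"
  shows "curve_length g a b \<le> curve_length g a c"
  using curve_length_additive[OF assms, of g] by simp

lemma curve_length_mono_left:
  assumes "a \<le> b" "b \<le> c"
  shows "curve_length g b c \<le> curve_length g a c"
  using curve_length_additive[OF assms, of g] by simp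

lemma curve_length_cong:
  assumes "\<And>t. t \<in> {a..b} \<Longrightarrow> g t = h t"
  shows "curve_length g a b = curve_length h a b"
proof -
  have "inscribed_sum g p = inscribed_sum h p" if "p \<in> partitions a b" for p
  proof -
    obtain t n where p: "p = (t, n)" by force
    have "g (t i) = h (t i)" if "i \<le> n" for i
      using assms partitions_range[of t n a b i] that \<open>p \<in> partitions a b\<close> p by auto
    then show ?thesis by (simp add: inscribed_sum_def p)
  qed
  then show ?thesis unfolding curve_length_partitions by simp
qed

lemma curve_length_affine:
  assumes "c > 0"
  shows "curve_length (\<lambda>t. g (c * t + e)) a b = curve_length g (c * a + e) (c * b + e)"
proof -
  let ?phi = "\<lambda>p::(nat \<Rightarrow> real) \<times> nat. (\<lambda>i. c * fst p i + e, snd p)"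
  have img: "?phi ` partitions a b = partitions (c * a + e) (c * b + e)"
  proof (intro equalityI subsetI)
    fix p assume "p \<in> ?phi ` partitions a b"
    then show "p \<in> partitions (c * a + e) (c * b + e)" using assms by (auto simp: partitions_def)
  next
    fix p assume p: "p \<in> partitions (c * a + e) (c * b + e)"
    obtain t n where pt: "p = (t, n)" by force
    have "(\<lambda>i. (t i - e) / c, n) \<in> partitions a b"
      using p pt assms by (auto simp: partitions_def divide_right_mono)
    moreover have "p = ?phi (\<lambda>i. (t i - e) / c, n)" using pt assms by auto
    ultimately show "p \<in> ?phi ` partitions a b" by blast
  qed
  have "curve_length g (c * a + e) (c * b + e) = (SUP p\<in>?phi ` partitions a b. ennreal (inscribed_sum g p))"
    unfolding curve_length_partitions img ..
  also have "\<dots> = (SUP p\<in>partitions a b. ennreal (inscribed_sum g (?phi p)))"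
    by (simp add: image_comp)
  also have "\<dots> = curve_length (\<lambda>t. g (c * t + e)) a b"
    unfolding curve_length_partitions by (simp add: inscribed_sum_def)
  finally show ?thesis ..
qed

definition seg_length :: "(real \<Rightarrow> 'a::metric_space) \<Rightarrow> real \<Rightarrow> real \<Rightarrow> real" where
  "seg_length g a b = enn2real (curve_length g a b)"

lemma rectifiable_curve_length_finite:
  assumes "rectifiable g" "0 \<le> a" "a \<le> b" "b \<le> 1"
  shows "curve_length g a b < \<infinity>"
proof -
  have "curve_length g a b \<le> curve_length g 0 b" using curve_length_mono_left[of 0 a b g] assms by simp
  also have "\<dots> \<le> curve_length g 0 1" using curve_length_mono_right[of 0 b 1 g] assms by simp
  finally show ?thesis using assms(1) by (auto simp: rectifiable_def)
qed

lemma curve_length_eq_seg_length: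
  assumes "rectifiable g" "0 \<le> a" "a \<le> b" "b \<le> 1"
  shows "curve_length g a b = ennreal (seg_length g a b)"
  using rectifiable_curve_length_finite[OF assms] by (simp add: seg_length_def ennreal_enn2real_if less_top)

lemma seg_length_nonneg: "0 \<le> seg_length g a b"
  by (simp add: seg_length_def)

lemma seg_length_additive:
  assumes "rectifiable g" "0 \<le> a" "a \<le> b" "b \<le> c" "c \<le> 1"
  shows "seg_length g a c = seg_length g a b + seg_length g b c"
proof -
  have "curve_length g a c = curve_length g a b + curve_length g b c"
    using curve_length_additive[of a b c g] assms by simp
  moreover have "curve_length g a c = ennreal (seg_length g a c)"
    by (rule curve_length_eq_seg_length) (use assms in auto)
  moreover have "curve_length g a b = ennreal (seg_length g a b)"
    by (rule curve_length_eq_seg_length) (use assms in auto)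
  moreover have "curve_length g b c = ennreal (seg_length g b c)"
    by (rule curve_length_eq_seg_length) (use assms in auto)
  ultimately have "ennreal (seg_length g a c) = ennreal (seg_length g a b) + ennreal (seg_length g b c)" by simp
  also have "\<dots> = ennreal (seg_length g a b + seg_length g b c)"
    by (rule ennreal_plus[symmetric]) (auto simp: seg_length_nonneg)
  finally show ?thesis by (subst (asm) ennreal_inj) (auto simp: seg_length_nonneg add_nonneg_nonneg)
qed

lemma dist_le_seg_length:
  assumes "rectifiable g" "0 \<le> a" "a \<le> b" "b \<le> 1"
  shows "dist (g a) (g b) \<le> seg_length g a b"
proof -
  have "ennreal (dist (g a) (g b)) \<le> ennreal (seg_length g a b)"
    using dist_le_curve_length[OF assms(3), of g] curve_length_eq_seg_length[OF assms] by simp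
  then show ?thesis using seg_length_nonneg[of g a b] by (simp add: ennreal_le_iff)
qed

lemma seg_length_refl: "seg_length g a a = 0"
  by (simp add: seg_length_def curve_length_refl)

lemma inscribed_sum_le_seg_length:
  assumes "rectifiable g" "0 \<le> a" "a \<le> b" "b \<le> 1" "p \<in> partitions a b"
  shows "inscribed_sum g p \<le> seg_length g a b"
proof -
  have "ennreal (inscribed_sum g p) \<le> ennreal (seg_length g a b)"
    using inscribed_sum_le_curve_length[OF assms(5), of g] curve_length_eq_seg_length[OF assms(1-4)] by simp
  then show ?thesis using seg_length_nonneg[of g a b] by (simp add: ennreal_le_iff)
qed

lemma seg_length_approx_partition:
  assumes "rectifiable g" "e > 0"
  obtains P n where "(P, n) \<in> partitions 0 1" "0 < n" "seg_length g 0 1 - e < inscribed_sum g (P, n)"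
proof -
  obtain p where p: "p \<in> partitions 0 1" "seg_length g 0 1 - e < inscribed_sum g p"
  proof (cases "seg_length g 0 1 - e < 0")
    case True
    then show ?thesis
      using that[OF trivial_partition[of 0 1]] inscribed_sum_nonneg[of g "(\<lambda>i. if i = 0 then 0 else 1, 1)"] by simp
  next
    case False
    then have "ennreal (seg_length g 0 1 - e) < curve_length g 0 1"
      using curve_length_eq_seg_length[OF assms(1), of 0 1] assms(2) by (simp add: ennreal_lessI)
    then obtain p where "p \<in> partitions 0 1" "ennreal (seg_length g 0 1 - e) < ennreal (inscribed_sum g p)"
      unfolding curve_length_partitions by (auto simp: less_SUP_iff)
    then show ?thesis using that False by (simp add: ennreal_less_iff)
  qed
  obtain P n where Pn: "p = (P, n)" by force
  with p have "n \<noteq> 0" by (cases n) (auto simp: partitions_def)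
  with Pn p show ?thesis using that by blast
qed

lemma inscribed_sum_le_middle:
  assumes g: "rectifiable g" and P: "(P, n) \<in> partitions 0 1" and st: "0 \<le> s" "s \<le> t" "t \<le> 1"
  shows "inscribed_sum g (P, n)
    \<le> seg_length g 0 s + inscribed_sum g (\<lambda>i. min (max (P i) s) t, n) + seg_length g t 1"
proof -
  have R: "(\<lambda>i. max (P i) s, n) \<in> partitions s 1" using partitions_max[OF P, of s] st by auto
  have "inscribed_sum g (P, n) \<le> inscribed_sum g (\<lambda>i. min (P i) s, n) + inscribed_sum g (\<lambda>i. max (P i) s, n)"
    by (rule inscribed_sum_split[OF P])
  also have "inscribed_sum g (\<lambda>i. max (P i) s, n) \<le>
      inscribed_sum g (\<lambda>i. min (max (P i) s) t, n) + inscribed_sum g (\<lambda>i. max (max (P i) s) t, n)"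
    by (rule inscribed_sum_split[OF R])
  also have "inscribed_sum g (\<lambda>i. min (P i) s, n) \<le> seg_length g 0 s"
    using inscribed_sum_le_seg_length[OF g _ st(1) _ partitions_min[OF P]] st by auto
  also have "inscribed_sum g (\<lambda>i. max (max (P i) s) t, n) \<le> seg_length g t 1"
    using inscribed_sum_le_seg_length[OF g _ _ _ partitions_max[OF R]] st by auto
  finally show ?thesis by simp
qed

lemma seg_length_uniformly_small:
  assumes g: "rectifiable g" and e: "e > 0"
  shows "\<exists>d>0. \<forall>s t. 0 \<le> s \<longrightarrow> s \<le> t \<longrightarrow> t \<le> 1 \<longrightarrow> t - s < d \<longrightarrow> seg_length g s t < e"
proof -
  obtain P n where P: "(P, n) \<in> partitions 0 1" "0 < n" "seg_length g 0 1 - e/2 < inscribed_sum g (P, n)"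
    using seg_length_approx_partition[OF g, of "e/2"] e by auto
  have "uniformly_continuous_on {0..1} g"
    using g by (intro compact_uniformly_continuous) (auto simp: rectifiable_def path_def)
  moreover have "0 < e / (2 * real n)" using e P(2) by simp
  ultimately obtain d where d: "d > 0" "\<And>x x'. x \<in> {0..1} \<Longrightarrow> x' \<in> {0..1} \<Longrightarrow> dist x' x < d \<Longrightarrow>
      dist (g x') (g x) < e / (2 * real n)"
    unfolding uniformly_continuous_on_def by metis
  show ?thesis
  proof (intro exI[of _ d] conjI allI impI d(1))
    fix s t :: real assume st: "0 \<le> s" "s \<le> t" "t \<le> 1" "t - s < d"
    have near: "dist (g a) (g b) < e / (2 * real n)" if "a \<in> {s..t}" "b \<in> {s..t}" for a b
      using d(2)[of b a] that st by (auto simp: dist_real_def abs_if)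
    have "inscribed_sum g (\<lambda>i. min (max (P i) s) t, n) < (\<Sum>i<n. e / (2 * real n))"
      unfolding inscribed_sum_def fst_conv snd_conv
      by (rule sum_strict_mono) (use P(2) st in \<open>auto intro!: near\<close>)
    also have "\<dots> = e / 2" using P(2) by simp
    finally have "inscribed_sum g (\<lambda>i. min (max (P i) s) t, n) < e / 2" .
    moreover have "seg_length g 0 1 = seg_length g 0 s + seg_length g s t + seg_length g t 1"
      using seg_length_additive[OF g, of 0 s 1] seg_length_additive[OF g, of s t 1] st by auto
    ultimately show "seg_length g s t < e"
      using inscribed_sum_le_middle[OF g P(1) st(1-3)] P(3) by linarith
  qed
qed

lemma arclength_fun_clamp:
  "arclength_fun g t = seg_length g 0 (max 0 (min t 1))"
proof (cases "t < 0")
  case True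
  then show ?thesis by (simp add: arclength_fun_def seg_length_def curve_length_empty curve_length_refl)
next
  case False
  then show ?thesis by (simp add: arclength_fun_def seg_length_def)
qed

lemma arclength_fun_eq:
  "0 \<le> t \<Longrightarrow> t \<le> 1 \<Longrightarrow> arclength_fun g t = seg_length g 0 t"
  by (simp add: arclength_fun_clamp)

lemma seg_length_mono:
  assumes "rectifiable g" "0 \<le> a" "a \<le> b" "b \<le> 1"
  shows "seg_length g 0 a \<le> seg_length g 0 b"
  using seg_length_additive[OF assms(1), of 0 a b] assms seg_length_nonneg[of g a b] by auto

lemma arclength_fun_mono_le:
  assumes "rectifiable g" "s \<le> t"
  shows "arclength_fun g s \<le> arclength_fun g t"
  unfolding arclength_fun_clamp using assms by (intro seg_length_mono) auto

lemma arclength_fun_diff: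
  assumes "rectifiable g" "0 \<le> a" "a \<le> b" "b \<le> 1"
  shows "arclength_fun g b - arclength_fun g a = seg_length g a b"
  using seg_length_additive[OF assms(1), of 0 a b] assms by (simp add: arclength_fun_eq)

lemma arclength_fun_0: "arclength_fun g 0 = 0"
  by (simp add: arclength_fun_eq seg_length_refl)

lemma continuous_on_arclength_fun:
  assumes "rectifiable g"
  shows "continuous_on UNIV (arclength_fun g)"
proof -
  have "uniformly_continuous_on UNIV (arclength_fun g)"
    unfolding uniformly_continuous_on_def
  proof (intro allI impI)
    fix e :: real assume "e > 0"
    then obtain d where d: "d > 0" "\<And>s t. 0 \<le> s \<Longrightarrow> s \<le> t \<Longrightarrow> t \<le> 1 \<Longrightarrow> t - s < d \<Longrightarrow> seg_length g s t < e"
      using seg_length_uniformly_small[OF assms] by blast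
    have near: "\<bar>arclength_fun g s - arclength_fun g t\<bar> < e" if "s \<le> t" "t - s < d" for s t
    proof -
      let ?s = "max 0 (min s 1)" and ?t = "max 0 (min t 1)"
      have "arclength_fun g t - arclength_fun g s = seg_length g ?s ?t"
        using arclength_fun_diff[OF assms, of ?s ?t] that by (simp add: arclength_fun_clamp)
      moreover have "seg_length g ?s ?t < e" using d(2)[of ?s ?t] that by auto
      moreover have "arclength_fun g s \<le> arclength_fun g t" using arclength_fun_mono_le[OF assms that(1)] .
      ultimately show ?thesis by auto
    qed
    show "\<exists>d>0. \<forall>x\<in>UNIV. \<forall>x'\<in>UNIV. dist x' x < d \<longrightarrow> dist (arclength_fun g x') (arclength_fun g x) < e"
    proof (intro exI[of _ d] conjI ballI impI d(1))
      fix x x' :: real assume "dist x' x < d"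
      then have "\<bar>x' - x\<bar> < d" by (simp add: dist_real_def)
      show "dist (arclength_fun g x') (arclength_fun g x) < e"
      proof (cases "x \<le> x'")
        case True
        then have "\<bar>arclength_fun g x - arclength_fun g x'\<bar> < e" using near[of x x'] \<open>\<bar>x' - x\<bar> < d\<close> by simp
        then show ?thesis by (simp add: dist_real_def abs_minus_commute)
      next
        case False
        then show ?thesis using near[of x' x] \<open>\<bar>x' - x\<bar> < d\<close> by (simp add: dist_real_def)
      qed
    qed
  qed
  then show ?thesis by (rule uniformly_continuous_imp_continuous)
qed

lemma continuous_at_right_of_continuous_on: "continuous_on UNIV F \<Longrightarrow> continuous (at_right a) (F :: real \<Rightarrow> real)"
  by (simp add: continuous_at_imp_continuous_at_within continuous_on_eq_continuous_at)

lemma measure_eqI_Ioc: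
  fixes M N :: "real measure"
  assumes sM: "sets M = sets borel" and sN: "sets N = sets borel"
    and eq: "\<And>a b. emeasure M {a<..b} = emeasure N {a<..b}"
    and fin: "\<And>a b. emeasure M {a<..b} \<noteq> \<infinity>"
  shows "M = N"
proof (rule measure_eqI_generator_eq_countable[where E="range (\<lambda>(a,b). {a<..b::real})"
      and \<Omega>=UNIV and A="range (\<lambda>n::nat. {-real n<..real n})"])
  show "Int_stable (range (\<lambda>(a, b). {a<..b::real}))"
  proof (rule Int_stableI)
    fix X Y assume "X \<in> range (\<lambda>(a, b). {a<..b::real})" "Y \<in> range (\<lambda>(a, b). {a<..b::real})"
    then obtain a b c d where "X = {a<..b}" "Y = {c<..d}" by auto
    then have "X \<inter> Y = {max a c<..min b d}" by auto
    then show "X \<inter> Y \<in> range (\<lambda>(a, b). {a<..b::real})" by (auto intro!: image_eqI[of _ _ "(max a c, min b d)"])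
  qed
  have "sets borel = sigma_sets UNIV (range (\<lambda>(a, b). {a<..b::real}))"
    by (subst borel_sigma_sets_Ioc) (simp add: sets_measure_of)
  then show "sets M = sigma_sets UNIV (range (\<lambda>(a, b). {a<..b::real}))"
    "sets N = sigma_sets UNIV (range (\<lambda>(a, b). {a<..b::real}))" using sM sN by auto
  show "\<Union> (range (\<lambda>n::nat. {- real n<..real n})) = UNIV"
  proof (intro equalityI subsetI)
    fix x :: real
    obtain n :: nat where "\<bar>x\<bar> < real n" using reals_Archimedean2 by blast
    then have "x \<in> {- real n<..real n}" by auto
    then show "x \<in> \<Union> (range (\<lambda>n::nat. {- real n<..real n}))" by blast
  qed auto
qed (use eq fin in auto)

lemma emeasure_interval_measure_Ioc_Int_Icc:
  fixes F :: "real \<Rightarrow> real"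
  assumes mono: "mono F" and cont: "continuous_on UNIV F" and uv: "u \<le> v" and ab: "a \<le> b"
  shows "emeasure (interval_measure F) ({a<..b} \<inter> {u..v}) = ennreal (F (max u (min b v)) - F (max u (min a v)))"
proof -
  have m: "\<And>x y. x \<le> y \<Longrightarrow> F x \<le> F y" using mono by (simp add: mono_def)
  have rc: "\<And>a. continuous (at_right a) F" using cont by (rule continuous_at_right_of_continuous_on)
  consider "b < u" | "v \<le> a" | "u \<le> b" "a < v" "a < u" | "u \<le> b" "a < v" "u \<le> a" by linarith
  then show ?thesis
  proof cases
    case 1
    then have "{a<..b} \<inter> {u..v} = {}" by auto
    moreover have "max u (min b v) = u" "max u (min a v) = u" using 1 ab uv by auto
    ultimately show ?thesis by simp
  next
    case 2
    then have "{a<..b} \<inter> {u..v} = {}" by auto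
    moreover have "max u (min b v) = v" "max u (min a v) = v" using 2 ab uv by auto
    ultimately show ?thesis by simp
  next
    case 3
    then have "{a<..b} \<inter> {u..v} = {u..min b v}" by auto
    moreover have "max u (min b v) = min b v" "max u (min a v) = u" using 3 ab uv by auto
    moreover have "emeasure (interval_measure F) {u..min b v} = F (min b v) - F u"
      by (rule emeasure_interval_measure_Icc) (use 3 uv m cont in auto)
    ultimately show ?thesis by simp
  next
    case 4
    then have "{a<..b} \<inter> {u..v} = {a<..min b v}" by auto
    moreover have "max u (min b v) = min b v" "max u (min a v) = a" using 4 ab uv by auto
    moreover have "emeasure (interval_measure F) {a<..min b v} = F (min b v) - F a"
      by (rule emeasure_interval_measure_Ioc) (use 4 ab m rc in auto)
    ultimately show ?thesis by simp
  qed
qed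

lemma interval_measure_affine:
  fixes F :: "real \<Rightarrow> real"
  assumes mono: "mono F" and cont: "continuous_on UNIV F" and c: "c > 0"
  shows "interval_measure (\<lambda>t. F (c * t + e) + k) = distr (interval_measure F) borel (\<lambda>s. (s - e) / c)"
proof (rule measure_eqI_Ioc)
  have m: "\<And>x y. x \<le> y \<Longrightarrow> F x \<le> F y" using mono by (simp add: mono_def)
  have rc: "\<And>a. continuous (at_right a) F" using cont by (rule continuous_at_right_of_continuous_on)
  have cont2: "continuous_on UNIV (\<lambda>t. F (c * t + e) + k)"
    by (intro continuous_intros continuous_on_compose2[OF cont]) auto
  have m2: "\<And>x y. x \<le> y \<Longrightarrow> F (c * x + e) + k \<le> F (c * y + e) + k"
    using m c by (simp add: mult_left_mono)
  show "sets (interval_measure (\<lambda>t. F (c * t + e) + k)) = sets borel" by simp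
  show "sets (distr (interval_measure F) borel (\<lambda>s. (s - e) / c)) = sets borel" by simp
  fix a b :: real
  show "emeasure (interval_measure (\<lambda>t. F (c * t + e) + k)) {a<..b} =
       emeasure (distr (interval_measure F) borel (\<lambda>s. (s - e) / c)) {a<..b}"
  proof (cases "a \<le> b")
    case True
    have "emeasure (interval_measure (\<lambda>t. F (c * t + e) + k)) {a<..b} = (F (c * b + e) + k) - (F (c * a + e) + k)"
      by (rule emeasure_interval_measure_Ioc[OF True m2 continuous_at_right_of_continuous_on[OF cont2]])
    moreover have "(\<lambda>s. (s - e) / c) -` {a<..b} \<inter> space (interval_measure F) = {c * a + e<..c * b + e}"
      using c by (auto simp: pos_less_divide_eq pos_divide_le_eq algebra_simps)
    moreover have "emeasure (interval_measure F) {c * a + e<..c * b + e} = F (c * b + e) - F (c * a + e)"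
      by (rule emeasure_interval_measure_Ioc[OF _ m rc]) (use True c in \<open>simp add: mult_left_mono\<close>)
    ultimately show ?thesis by (subst emeasure_distr) auto
  next
    case False then show ?thesis by simp
  qed
  show "emeasure (interval_measure (\<lambda>t. F (c * t + e) + k)) {a<..b} \<noteq> \<infinity>"
    by (cases "a \<le> b")
      (simp_all add: emeasure_interval_measure_Ioc[OF _ m2 continuous_at_right_of_continuous_on[OF cont2]])
qed

lemma borel_measurable_comp_indicator:
  fixes g :: "real \<Rightarrow> 'a::metric_space" and f :: "'a \<Rightarrow> ennreal"
  assumes g: "continuous_on {u..v} g" and f: "f \<in> borel_measurable borel"
  shows "(\<lambda>t. f (g t) * indicator {u..v} t) \<in> borel_measurable borel"
proof -
  have "(\<lambda>t. f (g t)) \<in> borel_measurable (restrict_space borel {u..v})"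
    using measurable_comp[OF borel_measurable_continuous_on_restrict[OF g] f] by (simp add: o_def)
  then have "(\<lambda>t. if t \<in> {u..v} then f (g t) else 0) \<in> borel_measurable borel"
    by (subst (asm) measurable_restrict_space_iff) auto
  moreover have "(\<lambda>t. if t \<in> {u..v} then f (g t) else 0) = (\<lambda>t. f (g t) * indicator {u..v} t)"
    by (auto simp: indicator_def)
  ultimately show ?thesis by simp
qed

lemma mono_arclength_fun: "rectifiable g \<Longrightarrow> mono (arclength_fun g)"
  by (simp add: mono_def arclength_fun_mono_le)

lemma emeasure_arclength_Icc:
  assumes "rectifiable g" "a \<le> b"
  shows "emeasure (interval_measure (arclength_fun g)) {a..b} = arclength_fun g b - arclength_fun g a"
  by (rule emeasure_interval_measure_Icc) (use assms arclength_fun_mono_le continuous_on_arclength_fun in auto)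

lemma arclength_fun_1: "arclength_fun g 1 = seg_length g 0 1"
  by (simp add: arclength_fun_eq)

lemma line_integral_le_const:
  assumes "rectifiable g" "K \<ge> 0" "\<And>t. t \<in> {0..1} \<Longrightarrow> f (g t) \<le> ennreal K"
  shows "line_integral f g \<le> ennreal (K * seg_length g 0 1)"
proof -
  have "line_integral f g \<le> (\<integral>\<^sup>+t. ennreal K * indicator {0..1} t \<partial>interval_measure (arclength_fun g))"
    unfolding line_integral_def using assms(3)
    by (intro nn_integral_mono) (auto simp: indicator_def)
  also have "\<dots> = ennreal K * emeasure (interval_measure (arclength_fun g)) {0..1}"
    by (rule nn_integral_cmult_indicator) simp
  also have "\<dots> = ennreal (K * seg_length g 0 1)"
    using emeasure_arclength_Icc[OF assms(1), of 0 1]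
      by (simp add: arclength_fun_0 arclength_fun_1 ennreal_mult assms(2) seg_length_nonneg)
  finally show ?thesis .
qed

lemma line_integral_ge_const:
  assumes "rectifiable g" "K \<ge> 0" "\<And>t. t \<in> {0..1} \<Longrightarrow> ennreal K \<le> f (g t)"
  shows "ennreal (K * seg_length g 0 1) \<le> line_integral f g"
proof -
  have "ennreal (K * seg_length g 0 1) = ennreal K * emeasure (interval_measure (arclength_fun g)) {0..1}"
    using emeasure_arclength_Icc[OF assms(1), of 0 1]
      by (simp add: arclength_fun_0 arclength_fun_1 ennreal_mult assms(2) seg_length_nonneg)
  also have "\<dots> = (\<integral>\<^sup>+t. ennreal K * indicator {0..1} t \<partial>interval_measure (arclength_fun g))"
    by (rule nn_integral_cmult_indicator[symmetric]) simp
  also have "\<dots> \<le> line_integral f g"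
    unfolding line_integral_def using assms(3)
    by (intro nn_integral_mono) (auto simp: indicator_def)
  finally show ?thesis .
qed

lemma nn_integral_split_Ioc:
  fixes F :: "real \<Rightarrow> real"
  assumes h: "h \<in> borel_measurable borel" and "a \<le> m" "m \<le> b"
  shows "(\<integral>\<^sup>+t. h t * indicator {a<..b} t \<partial>interval_measure F) =
    (\<integral>\<^sup>+t. h t * indicator {a<..m} t \<partial>interval_measure F) + (\<integral>\<^sup>+t. h t * indicator {m<..b} t \<partial>interval_measure F)"
proof -
  have "(\<lambda>t. h t * indicator {a<..b} t) = (\<lambda>t. h t * indicator {a<..m} t + h t * indicator {m<..b} t)"
    using assms(2,3) by (auto simp: indicator_def fun_eq_iff)
  then show ?thesis using h by (simp add: nn_integral_add)
qed

lemma nn_integral_interval_measure_Ioc_ge_const: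
  fixes F :: "real \<Rightarrow> real"
  assumes mono: "mono F" and cont: "continuous_on UNIV F" and "a \<le> b" "0 \<le> K"
    and h: "\<And>t. t \<in> {a<..b} \<Longrightarrow> ennreal K \<le> h t"
  shows "ennreal (K * (F b - F a)) \<le> (\<integral>\<^sup>+t. h t * indicator {a<..b} t \<partial>interval_measure F)"
proof -
  have "F a \<le> F b" using mono \<open>a \<le> b\<close> by (simp add: mono_def)
  moreover have "emeasure (interval_measure F) {a<..b} = F b - F a"
    by (rule emeasure_interval_measure_Ioc)
      (use assms continuous_at_right_of_continuous_on[OF cont] in \<open>auto simp: mono_def\<close>)
  ultimately have "ennreal (K * (F b - F a)) = ennreal K * emeasure (interval_measure F) {a<..b}"
    using \<open>0 \<le> K\<close> by (simp add: ennreal_mult)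
  also have "\<dots> = (\<integral>\<^sup>+t. ennreal K * indicator {a<..b} t \<partial>interval_measure F)"
    by (rule nn_integral_cmult_indicator[symmetric]) simp
  also have "\<dots> \<le> (\<integral>\<^sup>+t. h t * indicator {a<..b} t \<partial>interval_measure F)"
    using h by (intro nn_integral_mono) (auto simp: indicator_def)
  finally show ?thesis .
qed

text \<open>Split {a<..b} where F - F a reaches c, 3c, 7c, ...: on the j-th piece h is at least
  1/(2^(j+1) c) while F increases by 2^j c, so each piece contributes at least 1/2.\<close>

lemma dyadic_chain_lower_bound_left:
  fixes F :: "real \<Rightarrow> real"
  assumes mono: "mono F" and cont: "continuous_on UNIV F" and h: "h \<in> borel_measurable borel"
  shows "0 < c \<Longrightarrow> a \<le> b \<Longrightarrow> (2 ^ n - 1) * c \<le> F b - F a \<Longrightarrow>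
    (\<And>t. t \<in> {a<..b} \<Longrightarrow> ennreal (1 / (c + F t - F a)) \<le> h t) \<Longrightarrow>
    ennreal (real n / 2) \<le> (\<integral>\<^sup>+t. h t * indicator {a<..b} t \<partial>interval_measure F)"
proof (induction n arbitrary: a c)
  case 0 then show ?case by simp
next
  case (Suc n)
  have m: "\<And>x y. x \<le> y \<Longrightarrow> F x \<le> F y" using mono by (simp add: mono_def)
  have "c \<le> (2 ^ Suc n - 1) * c" using Suc.prems(1) by simp
  then have "F a + c \<le> F b" using Suc.prems(3) by linarith
  then obtain a' where a': "a \<le> a'" "a' \<le> b" "F a' = F a + c"
    using IVT'[of F a "F a + c" b] Suc.prems(1,2) continuous_on_subset[OF cont] by auto
  have "ennreal (1 / (2 * c) * (F a' - F a)) \<le> (\<integral>\<^sup>+t. h t * indicator {a<..a'} t \<partial>interval_measure F)"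
  proof (rule nn_integral_interval_measure_Ioc_ge_const[OF mono cont a'(1)])
    fix t assume t: "t \<in> {a<..a'}"
    then have "1 / (2 * c) \<le> 1 / (c + F t - F a)"
      using m[of a t] m[of t a'] a'(3) Suc.prems(1) by (intro divide_left_mono) auto
    also have "ennreal \<dots> \<le> h t" using t a' by (intro Suc.prems(4)) auto
    finally show "ennreal (1 / (2 * c)) \<le> h t" by (simp add: ennreal_leI)
  qed (use Suc.prems(1) in simp)
  then have I1: "ennreal (1/2) \<le> (\<integral>\<^sup>+t. h t * indicator {a<..a'} t \<partial>interval_measure F)"
    using a'(3) Suc.prems(1) by simp
  have I2: "ennreal (real n / 2) \<le> (\<integral>\<^sup>+t. h t * indicator {a'<..b} t \<partial>interval_measure F)"
  proof (rule Suc.IH)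
    show "0 < 2 * c" "a' \<le> b" using Suc.prems(1) a' by simp_all
    show "(2 ^ n - 1) * (2 * c) \<le> F b - F a'" using Suc.prems(3) a'(3) by (simp add: algebra_simps)
    fix t assume "t \<in> {a'<..b}"
    then show "ennreal (1 / (2 * c + F t - F a')) \<le> h t"
      using Suc.prems(4)[of t] a' by (auto simp: algebra_simps)
  qed
  have "ennreal (real (Suc n) / 2) = ennreal (1/2) + ennreal (real n / 2)"
    by (simp add: ennreal_plus[symmetric] add_divide_distrib)
  also have "\<dots> \<le> (\<integral>\<^sup>+t. h t * indicator {a<..b} t \<partial>interval_measure F)"
    using add_mono[OF I1 I2] nn_integral_split_Ioc[OF h a'(1,2)] by simp
  finally show ?case .
qed

lemma dyadic_chain_lower_bound_right:
  fixes F :: "real \<Rightarrow> real"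
  assumes mono: "mono F" and cont: "continuous_on UNIV F" and h: "h \<in> borel_measurable borel"
  shows "0 < c \<Longrightarrow> a \<le> b \<Longrightarrow> (2 ^ n - 1) * c \<le> F b - F a \<Longrightarrow>
    (\<And>t. t \<in> {a<..b} \<Longrightarrow> ennreal (1 / (c + F b - F t)) \<le> h t) \<Longrightarrow>
    ennreal (real n / 2) \<le> (\<integral>\<^sup>+t. h t * indicator {a<..b} t \<partial>interval_measure F)"
proof (induction n arbitrary: b c)
  case 0 then show ?case by simp
next
  case (Suc n)
  have m: "\<And>x y. x \<le> y \<Longrightarrow> F x \<le> F y" using mono by (simp add: mono_def)
  have "c \<le> (2 ^ Suc n - 1) * c" using Suc.prems(1) by simp
  then have "F a \<le> F b - c" "F b - c \<le> F b" using Suc.prems(1,3) by linarith+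
  then obtain b' where b': "a \<le> b'" "b' \<le> b" "F b' = F b - c"
    using IVT'[of F a "F b - c" b] Suc.prems(1,2) continuous_on_subset[OF cont] by auto
  have "ennreal (1 / (2 * c) * (F b - F b')) \<le> (\<integral>\<^sup>+t. h t * indicator {b'<..b} t \<partial>interval_measure F)"
  proof (rule nn_integral_interval_measure_Ioc_ge_const[OF mono cont b'(2)])
    fix t assume t: "t \<in> {b'<..b}"
    then have "1 / (2 * c) \<le> 1 / (c + F b - F t)"
      using m[of b' t] m[of t b] b'(3) Suc.prems(1) by (intro divide_left_mono) auto
    also have "ennreal \<dots> \<le> h t" using t b' by (intro Suc.prems(4)) auto
    finally show "ennreal (1 / (2 * c)) \<le> h t" by (simp add: ennreal_leI)
  qed (use Suc.prems(1) in simp)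
  then have I1: "ennreal (1/2) \<le> (\<integral>\<^sup>+t. h t * indicator {b'<..b} t \<partial>interval_measure F)"
    using b'(3) Suc.prems(1) by simp
  have I2: "ennreal (real n / 2) \<le> (\<integral>\<^sup>+t. h t * indicator {a<..b'} t \<partial>interval_measure F)"
  proof (rule Suc.IH)
    show "0 < 2 * c" "a \<le> b'" using Suc.prems(1) b' by simp_all
    show "(2 ^ n - 1) * (2 * c) \<le> F b' - F a" using Suc.prems(3) b'(3) by (simp add: algebra_simps)
    fix t assume "t \<in> {a<..b'}"
    moreover have "2 * c + F b' - F t = c + F b - F t" using b'(3) by simp
    ultimately show "ennreal (1 / (2 * c + F b' - F t)) \<le> h t"
      using Suc.prems(4)[of t] b' by auto
  qed
  have "ennreal (real (Suc n) / 2) = ennreal (real n / 2) + ennreal (1/2)"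
    by (simp add: ennreal_plus[symmetric] add_divide_distrib)
  also have "\<dots> \<le> (\<integral>\<^sup>+t. h t * indicator {a<..b} t \<partial>interval_measure F)"
    using add_mono[OF I2 I1] nn_integral_split_Ioc[OF h b'(1,2)] by simp
  finally show ?case .
qed

lemma density_interval_measure_cong:
  fixes F G :: "real \<Rightarrow> real"
  assumes F: "mono F" "continuous_on UNIV F" and G: "mono G" "continuous_on UNIV G" and uv: "u \<le> v"
    and eq: "\<And>t. t \<in> {u..v} \<Longrightarrow> F t = G t"
  shows "density (interval_measure F) (indicator {u..v}) = density (interval_measure G) (indicator {u..v})"
proof (rule measure_eqI_Ioc)
  fix a b :: real
  have restricted: "emeasure (density (interval_measure H) (indicator {u..v})) {a<..b} =
      emeasure (interval_measure H) ({a<..b} \<inter> {u..v})" for H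
    by (subst emeasure_restricted) (auto simp: Int_commute)
  have "max u (min a v) \<in> {u..v}" "max u (min b v) \<in> {u..v}" using uv by auto
  then show "emeasure (density (interval_measure F) (indicator {u..v})) {a<..b} =
      emeasure (density (interval_measure G) (indicator {u..v})) {a<..b}"
    by (cases "a \<le> b") (simp_all add: restricted eq emeasure_interval_measure_Ioc_Int_Icc[OF F uv]
        emeasure_interval_measure_Ioc_Int_Icc[OF G uv])
  show "emeasure (density (interval_measure F) (indicator {u..v})) {a<..b} \<noteq> \<infinity>"
    by (cases "a \<le> b") (simp_all add: restricted emeasure_interval_measure_Ioc_Int_Icc[OF F uv])
qed simp_all

lemma nn_integral_interval_measure_cong:
  fixes F G :: "real \<Rightarrow> real"
  assumes "mono F" "continuous_on UNIV F" "mono G" "continuous_on UNIV G" "u \<le> v"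
    and "\<And>t. t \<in> {u..v} \<Longrightarrow> F t = G t"
    and h: "(\<lambda>t. h t * indicator {u..v} t) \<in> borel_measurable borel"
  shows "(\<integral>\<^sup>+t. h t * indicator {u..v} t \<partial>interval_measure F) =
    (\<integral>\<^sup>+t. h t * indicator {u..v} t \<partial>interval_measure G)"
proof -
  have "(\<integral>\<^sup>+t. h t * indicator {u..v} t \<partial>interval_measure H) =
      (\<integral>\<^sup>+t. h t * indicator {u..v} t \<partial>density (interval_measure H) (indicator {u..v}))" for H
    using h by (simp add: nn_integral_density) (intro nn_integral_cong; simp add: indicator_def)
  then show ?thesis by (simp only: density_interval_measure_cong[OF assms(1-6)])
qed

lemma nn_integral_interval_measure_affine:
  fixes F :: "real \<Rightarrow> real" and \<gamma> :: "real \<Rightarrow> 'a::metric_space" and f :: "'a \<Rightarrow> ennreal"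
  assumes F: "mono F" "continuous_on UNIV F" and c: "c > 0"
    and g: "continuous_on {0..1} \<gamma>" and f: "f \<in> borel_measurable borel"
    and cu: "c * u + e = 0" and cv: "c * v + e = 1"
  shows "(\<integral>\<^sup>+t. f (\<gamma> (c * t + e)) * indicator {u..v} t \<partial>interval_measure (\<lambda>t. F (c * t + e) + k)) =
         (\<integral>\<^sup>+s. f (\<gamma> s) * indicator {0..1} s \<partial>interval_measure F)"
proof -
  have "(\<lambda>t. c * t + e) ` {u..v} \<subseteq> {0..1}"
    using c by (auto intro!: add_right_mono mult_left_mono simp flip: cu cv)
  then have "continuous_on {u..v} (\<lambda>t. \<gamma> (c * t + e))"
    by (intro continuous_on_compose2[OF g] continuous_intros)
  then have meas: "(\<lambda>t. f (\<gamma> (c * t + e)) * indicator {u..v} t) \<in> borel_measurable borel"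
    by (rule borel_measurable_comp_indicator[OF _ f])
  have "(\<integral>\<^sup>+t. f (\<gamma> (c * t + e)) * indicator {u..v} t \<partial>interval_measure (\<lambda>t. F (c * t + e) + k)) =
     (\<integral>\<^sup>+s. f (\<gamma> (c * ((s - e) / c) + e)) * indicator {u..v} ((s - e) / c) \<partial>interval_measure F)"
    unfolding interval_measure_affine[OF F c] by (rule nn_integral_distr) (use meas in auto)
  also have "\<dots> = (\<integral>\<^sup>+s. f (\<gamma> s) * indicator {0..1} s \<partial>interval_measure F)"
  proof (intro nn_integral_cong)
    fix s :: real
    have "((s - e) / c \<in> {u..v}) = (s \<in> {0..1})"
      using c cu cv by (auto simp: pos_le_divide_eq pos_divide_le_eq algebra_simps)
    then show "f (\<gamma> (c * ((s - e) / c) + e)) * indicator {u..v} ((s - e) / c) = f (\<gamma> s) * indicator {0..1} s"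
      using c by (simp add: indicator_def)
  qed
  finally show ?thesis .
qed

lemma nn_integral_interval_measure_reparam:
  fixes Fj F :: "real \<Rightarrow> real" and j \<gamma> :: "real \<Rightarrow> 'a::metric_space" and f :: "'a \<Rightarrow> ennreal"
  assumes Fj: "mono Fj" "continuous_on UNIV Fj" and F: "mono F" "continuous_on UNIV F"
    and c: "c > 0" and uv: "u \<le> v"
    and eqF: "\<And>t. t \<in> {u..v} \<Longrightarrow> Fj t = F (c * t + e) + k"
    and eqj: "\<And>t. t \<in> {u..v} \<Longrightarrow> j t = \<gamma> (c * t + e)"
    and g: "continuous_on {0..1} \<gamma>" and f: "f \<in> borel_measurable borel"
    and cu: "c * u + e = 0" and cv: "c * v + e = 1"
  shows "(\<integral>\<^sup>+t. f (j t) * indicator {u..v} t \<partial>interval_measure Fj) =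
         (\<integral>\<^sup>+s. f (\<gamma> s) * indicator {0..1} s \<partial>interval_measure F)"
proof -
  let ?G = "\<lambda>t. F (c * t + e) + k"
  have G: "mono ?G" "continuous_on UNIV ?G"
    using F c by (auto simp: mono_def mult_left_mono intro!: continuous_intros continuous_on_compose2[OF F(2)])
  have "(\<lambda>t. c * t + e) ` {u..v} \<subseteq> {0..1}"
    using c by (auto intro!: add_right_mono mult_left_mono simp flip: cu cv)
  then have "continuous_on {u..v} (\<lambda>t. \<gamma> (c * t + e))"
    by (intro continuous_on_compose2[OF g] continuous_intros)
  then have meas: "(\<lambda>t. f (\<gamma> (c * t + e)) * indicator {u..v} t) \<in> borel_measurable borel"
    by (rule borel_measurable_comp_indicator[OF _ f])
  have "(\<integral>\<^sup>+t. f (j t) * indicator {u..v} t \<partial>interval_measure Fj) =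
        (\<integral>\<^sup>+t. f (\<gamma> (c * t + e)) * indicator {u..v} t \<partial>interval_measure Fj)"
    by (intro nn_integral_cong) (auto simp: indicator_def eqj)
  also have "\<dots> = (\<integral>\<^sup>+t. f (\<gamma> (c * t + e)) * indicator {u..v} t \<partial>interval_measure ?G)"
    by (rule nn_integral_interval_measure_cong[OF Fj G uv eqF meas])
  also have "\<dots> = (\<integral>\<^sup>+s. f (\<gamma> s) * indicator {0..1} s \<partial>interval_measure F)"
    by (rule nn_integral_interval_measure_affine[OF F c g f cu cv])
  finally show ?thesis .
qed

lemma joinpaths_second_half:
  assumes "pathfinish \<gamma> = pathstart \<sigma>" "t \<in> {1/2..1}"
  shows "(\<gamma> +++ \<sigma>) t = \<sigma> (2 * t - 1)"
proof (cases "t = 1/2")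
  case True
  show ?thesis unfolding True using assms(1) by (simp add: joinpaths_def pathfinish_def pathstart_def)
qed (use assms(2) in \<open>simp add: joinpaths_def\<close>)

lemma joinpaths_first_half: "t \<le> 1/2 \<Longrightarrow> (\<gamma> +++ \<sigma>) t = \<gamma> (2 * t)"
  by (simp add: joinpaths_def)

lemma curve_length_joinpaths_first:
  assumes "t \<in> {0..1/2}"
  shows "curve_length (\<gamma> +++ \<sigma>) 0 t = curve_length \<gamma> 0 (2 * t)"
proof -
  have "curve_length (\<gamma> +++ \<sigma>) 0 t = curve_length (\<lambda>s. \<gamma> (2 * s + 0)) 0 t"
    by (rule curve_length_cong) (use assms in \<open>auto simp: joinpaths_first_half\<close>)
  also have "\<dots> = curve_length \<gamma> (2 * 0 + 0) (2 * t + 0)" by (rule curve_length_affine) simp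
  finally show ?thesis by simp
qed

lemma curve_length_joinpaths_second:
  assumes pf: "pathfinish \<gamma> = pathstart \<sigma>" and t: "t \<in> {1/2..1}"
  shows "curve_length (\<gamma> +++ \<sigma>) 0 t = curve_length \<gamma> 0 1 + curve_length \<sigma> 0 (2 * t - 1)"
proof -
  have "curve_length (\<gamma> +++ \<sigma>) (1/2) t = curve_length (\<lambda>s. \<sigma> (2 * s + - 1)) (1/2) t"
    by (rule curve_length_cong) (use joinpaths_second_half[OF pf] t in auto)
  also have "\<dots> = curve_length \<sigma> (2 * (1/2) + - 1) (2 * t + - 1)" by (rule curve_length_affine) simp
  finally show ?thesis
    using curve_length_additive[of 0 "1/2" t "\<gamma> +++ \<sigma>"] t
      curve_length_joinpaths_first[where t="1/2" and \<gamma>=\<gamma> and \<sigma>=\<sigma>] by simp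
qed

lemma rectifiable_joinpaths:
  assumes "rectifiable \<gamma>" "rectifiable \<sigma>" "pathfinish \<gamma> = pathstart \<sigma>"
  shows "rectifiable (\<gamma> +++ \<sigma>)"
  using assms curve_length_joinpaths_second[of \<gamma> \<sigma> 1]
  by (auto simp: rectifiable_def intro: path_join_imp)

lemma arclength_fun_joinpaths_first:
  "t \<in> {0..1/2} \<Longrightarrow> arclength_fun (\<gamma> +++ \<sigma>) t = arclength_fun \<gamma> (2 * t)"
  by (simp add: arclength_fun_eq seg_length_def curve_length_joinpaths_first)

lemma arclength_fun_joinpaths_second:
  assumes "rectifiable \<gamma>" "rectifiable \<sigma>" "pathfinish \<gamma> = pathstart \<sigma>" "t \<in> {1/2..1}"
  shows "arclength_fun (\<gamma> +++ \<sigma>) t = arclength_fun \<sigma> (2 * t - 1) + seg_length \<gamma> 0 1"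
proof -
  have "curve_length \<gamma> 0 1 < \<infinity>" "curve_length \<sigma> 0 (2 * t - 1) < \<infinity>"
    using assms rectifiable_curve_length_finite[OF assms(2), of 0 "2 * t - 1"]
    by (auto simp: rectifiable_def)
  then show ?thesis
    using assms(4) by (simp add: arclength_fun_eq seg_length_def curve_length_joinpaths_second[OF assms(3)]
        enn2real_plus less_top)
qed

lemma line_integral_joinpaths_le:
  fixes \<gamma> \<sigma> :: "real \<Rightarrow> 'a::metric_space" and f :: "'a \<Rightarrow> ennreal"
  assumes r1: "rectifiable \<gamma>" and r2: "rectifiable \<sigma>" and pf: "pathfinish \<gamma> = pathstart \<sigma>"
    and f: "f \<in> borel_measurable borel"
  shows "line_integral f (\<gamma> +++ \<sigma>) \<le> line_integral f \<gamma> + line_integral f \<sigma>"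
proof -
  let ?j = "\<gamma> +++ \<sigma>"
  let ?M = "interval_measure (arclength_fun ?j)"
  have rj: "rectifiable ?j" using rectifiable_joinpaths[OF r1 r2 pf] .
  then have cj: "continuous_on {0..1} ?j" by (simp add: rectifiable_def path_def)
  have m1: "(\<lambda>t. f (?j t) * indicator {0..1/2} t) \<in> borel_measurable borel"
    and m2: "(\<lambda>t. f (?j t) * indicator {1/2..1} t) \<in> borel_measurable borel"
    by (rule borel_measurable_comp_indicator[OF continuous_on_subset[OF cj] f]; simp)+
  have "line_integral f ?j \<le> (\<integral>\<^sup>+t. f (?j t) * indicator {0..1/2} t + f (?j t) * indicator {1/2..1} t \<partial>?M)"
    unfolding line_integral_def by (intro nn_integral_mono) (auto simp: indicator_def)
  also have "\<dots> = (\<integral>\<^sup>+t. f (?j t) * indicator {0..1/2} t \<partial>?M) + (\<integral>\<^sup>+t. f (?j t) * indicator {1/2..1} t \<partial>?M)"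
    using m1 m2 by (simp add: nn_integral_add)
  also have "(\<integral>\<^sup>+t. f (?j t) * indicator {0..1/2} t \<partial>?M) = line_integral f \<gamma>"
    unfolding line_integral_def
    by (rule nn_integral_interval_measure_reparam[where c=2 and e=0 and k=0])
      (use rj r1 f in \<open>auto simp: mono_arclength_fun continuous_on_arclength_fun joinpaths_first_half
        arclength_fun_joinpaths_first path_def rectifiable_def\<close>)
  also have "(\<integral>\<^sup>+t. f (?j t) * indicator {1/2..1} t \<partial>?M) = line_integral f \<sigma>"
    unfolding line_integral_def
    by (rule nn_integral_interval_measure_reparam[where c=2 and e="-1" and k="seg_length \<gamma> 0 1"])
      (use rj r1 r2 pf f in \<open>auto simp: mono_arclength_fun continuous_on_arclength_fun joinpaths_second_half
        arclength_fun_joinpaths_second path_def rectifiable_def\<close>)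
  finally show ?thesis .
qed

abbreviation qh_length :: "'a::metric_space set \<Rightarrow> (real \<Rightarrow> 'a) \<Rightarrow> ennreal" where
  "qh_length \<Omega> \<equiv> line_integral (\<lambda>z. ennreal (1 / dist_bdry \<Omega> z))"

definition admissible :: "'a::metric_space set \<Rightarrow> 'a \<Rightarrow> 'a \<Rightarrow> (real \<Rightarrow> 'a) \<Rightarrow> bool" where
  "admissible \<Omega> x y g \<longleftrightarrow> curve_in \<Omega> g \<and> rectifiable g \<and> pathstart g = x \<and> pathfinish g = y"

lemma admissible_rectifiable: "admissible \<Omega> x y g \<Longrightarrow> rectifiable g" by (simp add: admissible_def)

lemma admissible_in: "admissible \<Omega> x y g \<Longrightarrow> t \<in> {0..1} \<Longrightarrow> g t \<in> \<Omega>"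
  by (auto simp: admissible_def curve_in_def path_image_def)

lemma admissible_dist_start:
  assumes "admissible \<Omega> x y g" "t \<in> {0..1}"
  shows "dist x (g t) \<le> arclength_fun g t"
  using dist_le_seg_length[OF admissible_rectifiable[OF assms(1)], of 0 t] assms
  by (auto simp: arclength_fun_eq admissible_def pathstart_def)

lemma admissible_dist_finish:
  assumes "admissible \<Omega> x y g" "t \<in> {0..1}"
  shows "dist (g t) y \<le> seg_length g 0 1 - arclength_fun g t"
proof -
  have "dist (g t) (g 1) \<le> seg_length g t 1"
    using dist_le_seg_length[OF admissible_rectifiable[OF assms(1)], of t 1] assms by auto
  moreover have "arclength_fun g 1 - arclength_fun g t = seg_length g t 1"
    using arclength_fun_diff[OF admissible_rectifiable[OF assms(1)], of t 1] assms by auto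
  ultimately show ?thesis using assms by (auto simp: arclength_fun_1 admissible_def pathfinish_def)
qed

lemma admissible_arclength_bounds:
  assumes "admissible \<Omega> x y g" "t \<in> {0..1}"
  shows "0 \<le> arclength_fun g t" "arclength_fun g t \<le> seg_length g 0 1"
  using arclength_fun_mono_le[OF admissible_rectifiable[OF assms(1)], of 0 t]
    arclength_fun_mono_le[OF admissible_rectifiable[OF assms(1)], of t 1] assms
  by (auto simp: arclength_fun_0 arclength_fun_1)

lemma admissible_join:
  assumes "admissible \<Omega> x y g" "admissible \<Omega> y z h"
  shows "admissible \<Omega> x z (g +++ h)"
proof -
  have "pathfinish g = pathstart h" using assms by (simp add: admissible_def)
  then show ?thesis using assms rectifiable_joinpaths[of g h] path_image_join_subset[of g h]
    by (auto simp: admissible_def curve_in_def intro: path_join_imp)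
qed

lemma qh_dist_le_qh_length: "admissible \<Omega> x y g \<Longrightarrow> qh_dist \<Omega> x y \<le> qh_length \<Omega> g"
  unfolding qh_dist_def by (rule INF_lower) (simp add: admissible_def)

lemma qh_dist_lessE:
  assumes "qh_dist \<Omega> x y < r"
  obtains g where "admissible \<Omega> x y g" "qh_length \<Omega> g < r"
  using assms unfolding qh_dist_def INF_less_iff by (auto simp: admissible_def)

lemma qh_ball_subset: "qh_ball \<Omega> x r \<subseteq> \<Omega>" by (auto simp: qh_ball_def)

lemma qh_ball_mono: "r \<le> s \<Longrightarrow> qh_ball \<Omega> x r \<subseteq> qh_ball \<Omega> x s"
  by (auto simp: qh_ball_def intro: less_le_trans ennreal_leI)

lemma admissible_dist_le_length: "admissible \<Omega> x y g \<Longrightarrow> dist x y \<le> seg_length g 0 1"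
  using dist_le_seg_length[OF admissible_rectifiable, of \<Omega> x y g 0 1]
    by (simp add: admissible_def pathstart_def pathfinish_def)

lemma dist_bdry_lipschitz: "dist_bdry \<Omega> y \<le> dist_bdry \<Omega> x + dist x y"
  unfolding dist_bdry_def using infdist_triangle[of y "bdry_compl \<Omega>" x] by (simp add: dist_commute)

lemma continuous_on_dist_bdry: "continuous_on UNIV (dist_bdry \<Omega>)"
  unfolding dist_bdry_def by (intro continuous_intros)

lemma borel_measurable_qh_weight: "(\<lambda>z. ennreal (1 / dist_bdry \<Omega> z)) \<in> borel_measurable borel"
proof -
  have "dist_bdry \<Omega> \<in> borel_measurable borel" using continuous_on_dist_bdry
    by (rule borel_measurable_continuous_onI)
  then have "(\<lambda>z. 1 / dist_bdry \<Omega> z) \<in> borel_measurable borel" by measurable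
  then show ?thesis by measurable
qed

locale qh_domain =
  fixes \<Omega> :: "'a::complete_space set" and L :: real
  assumes qc: "quasiconvex L \<Omega>" and nc: "\<not> complete \<Omega>"
    and oc: "openin (top_of_set (closure \<Omega>)) \<Omega>"
begin

lemma bdry_compl_nonempty: "bdry_compl \<Omega> \<noteq> {}"
proof
  assume "bdry_compl \<Omega> = {}"
  then have "closure \<Omega> \<subseteq> \<Omega>" by (auto simp: bdry_compl_def)
  then have "closed \<Omega>" by (simp add: closure_subset_eq)
  then show False using nc complete_eq_closed[of \<Omega>] by simp
qed

lemma dist_bdry_pos: "x \<in> \<Omega> \<Longrightarrow> 0 < dist_bdry \<Omega> x"
proof -
  assume x: "x \<in> \<Omega>"
  obtain T where T: "open T" "\<Omega> = closure \<Omega> \<inter> T" using oc by (auto simp: openin_open)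
  then have "x \<in> T" using x by auto
  then obtain e where e: "e > 0" "ball x e \<subseteq> T" using T(1) open_contains_ball by blast
  have "e \<le> dist x z" if "z \<in> bdry_compl \<Omega>" for z
  proof (rule ccontr)
    assume "\<not> e \<le> dist x z"
    then have "z \<in> T" using e by auto
    then have "z \<in> \<Omega>" using that T(2) by (auto simp: bdry_compl_def)
    then show False using that by (auto simp: bdry_compl_def)
  qed
  then have "e \<le> infdist x (bdry_compl \<Omega>)"
    unfolding infdist_notempty[OF bdry_compl_nonempty] by (intro cINF_greatest bdry_compl_nonempty) auto
  then show ?thesis using e by (simp add: dist_bdry_def)
qed

lemma exists_two_points: "\<exists>x\<in>\<Omega>. \<exists>y\<in>\<Omega>. x \<noteq> y"
proof (rule ccontr)
  assume "\<not> ?thesis"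
  then have sub: "x \<in> \<Omega> \<Longrightarrow> \<Omega> \<subseteq> {x}" for x by blast
  have "finite \<Omega>"
  proof (cases "\<Omega> = {}")
    case False
    then obtain x where "x \<in> \<Omega>" by blast
    then show ?thesis using sub finite_subset by blast
  qed simp
  then have "closed \<Omega>" by (rule finite_imp_closed)
  then show False using nc complete_eq_closed[of \<Omega>] by simp
qed

lemma quasiconvex_curve:
  assumes "x \<in> \<Omega>" "y \<in> \<Omega>"
  obtains g where "admissible \<Omega> x y g" "seg_length g 0 1 \<le> L * dist x y"
proof -
  obtain g where g: "curve_in \<Omega> g" "pathstart g = x" "pathfinish g = y"
    "curve_length g 0 1 \<le> ennreal (L * dist x y)"
  proof -
    have "\<exists>g. curve_in \<Omega> g \<and> pathstart g = x \<and> pathfinish g = y \<and> curve_length g 0 1 \<le> ennreal (L * dist x y)"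
      using qc assms unfolding quasiconvex_def by simp
    then show ?thesis using that by (elim exE conjE) simp
  qed
  have "curve_length g 0 1 < \<infinity>" by (rule le_less_trans[OF g(4)]) simp
  then have r: "rectifiable g" using g by (auto simp: rectifiable_def curve_in_def)
  have "ennreal (seg_length g 0 1) \<le> ennreal (L * dist x y)"
    using g(4) curve_length_eq_seg_length[OF r, of 0 1] by simp
  moreover have "0 \<le> L * dist x y"
  proof (rule ccontr)
    assume "\<not> 0 \<le> L * dist x y"
    then have "ennreal (L * dist x y) = 0" by (simp add: ennreal_neg)
    then have "curve_length g 0 1 = 0" using g(4) by simp
    moreover have "ennreal (dist (g 0) (g 1)) \<le> curve_length g 0 1" by (rule dist_le_curve_length) simp
    ultimately have "g 0 = g 1" by simp
    then have "x = y" using g by (simp add: pathstart_def pathfinish_def)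
    then show False using \<open>\<not> 0 \<le> L * dist x y\<close> by simp
  qed
  ultimately have "seg_length g 0 1 \<le> L * dist x y" by (simp add: ennreal_le_iff)
  then show ?thesis using that g r by (auto simp: admissible_def)
qed

lemma quasiconvex_const_ge_1: "1 \<le> L"
proof -
  obtain x y where xy: "x \<in> \<Omega>" "y \<in> \<Omega>" "x \<noteq> y" using exists_two_points by blast
  obtain g where g: "admissible \<Omega> x y g" "seg_length g 0 1 \<le> L * dist x y"
    using quasiconvex_curve[OF xy(1,2)] by blast
  have "dist x y \<le> seg_length g 0 1" by (rule admissible_dist_le_length[OF g(1)])
  then have "1 * dist x y \<le> L * dist x y" using g(2) by simp
  then show ?thesis using xy(3) by simp
qed

lemma dist_bdry_along_admissible:
  assumes "admissible \<Omega> x y g" "t \<in> {0..1}"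
  shows "dist_bdry \<Omega> (g t) \<le> dist_bdry \<Omega> x + arclength_fun g t"
    "dist_bdry \<Omega> x - arclength_fun g t \<le> dist_bdry \<Omega> (g t)"
    "dist_bdry \<Omega> (g t) \<le> dist_bdry \<Omega> y + (seg_length g 0 1 - arclength_fun g t)"
    "0 < dist_bdry \<Omega> (g t)"
  using dist_bdry_lipschitz[of \<Omega> "g t" x] dist_bdry_lipschitz[of \<Omega> x "g t"]
    dist_bdry_lipschitz[of \<Omega> "g t" y] admissible_dist_start[OF assms] admissible_dist_finish[OF assms]
    dist_bdry_pos[OF admissible_in[OF assms]]
  by (auto simp: dist_commute)

lemma qh_length_lower_bound:
  assumes "admissible \<Omega> x y g" "x \<in> \<Omega>"
  shows "ennreal (seg_length g 0 1 / (dist_bdry \<Omega> x + seg_length g 0 1)) \<le> qh_length \<Omega> g"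
proof -
  have dx: "0 < dist_bdry \<Omega> x" using dist_bdry_pos[OF assms(2)] .
  have "ennreal (1 / (dist_bdry \<Omega> x + seg_length g 0 1) * seg_length g 0 1) \<le> qh_length \<Omega> g"
  proof (rule line_integral_ge_const[OF admissible_rectifiable[OF assms(1)]])
    show "0 \<le> 1 / (dist_bdry \<Omega> x + seg_length g 0 1)" using dx seg_length_nonneg[of g 0 1] by simp
    fix t :: real assume t: "t \<in> {0..1}"
    have "dist_bdry \<Omega> (g t) \<le> dist_bdry \<Omega> x + seg_length g 0 1"
      using dist_bdry_along_admissible(1)[OF assms(1) t] admissible_arclength_bounds[OF assms(1) t] by linarith
    then have "1 / (dist_bdry \<Omega> x + seg_length g 0 1) \<le> 1 / dist_bdry \<Omega> (g t)"
      using dist_bdry_along_admissible(4)[OF assms(1) t] by (intro divide_left_mono) auto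
    then show "ennreal (1 / (dist_bdry \<Omega> x + seg_length g 0 1)) \<le> ennreal (1 / dist_bdry \<Omega> (g t))"
      by (rule ennreal_leI)
  qed
  then show ?thesis by simp
qed

lemma qh_length_upper_bound:
  assumes "admissible \<Omega> x y g" "x \<in> \<Omega>" "seg_length g 0 1 < dist_bdry \<Omega> x"
  shows "qh_length \<Omega> g \<le> ennreal (seg_length g 0 1 / (dist_bdry \<Omega> x - seg_length g 0 1))"
proof -
  have "qh_length \<Omega> g \<le> ennreal (1 / (dist_bdry \<Omega> x - seg_length g 0 1) * seg_length g 0 1)"
  proof (rule line_integral_le_const[OF admissible_rectifiable[OF assms(1)]])
    show "0 \<le> 1 / (dist_bdry \<Omega> x - seg_length g 0 1)" using assms(3) by simp
    fix t :: real assume t: "t \<in> {0..1}"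
    have "dist_bdry \<Omega> x - seg_length g 0 1 \<le> dist_bdry \<Omega> (g t)"
      using dist_bdry_along_admissible(2)[OF assms(1) t] admissible_arclength_bounds[OF assms(1) t] by linarith
    then have "1 / dist_bdry \<Omega> (g t) \<le> 1 / (dist_bdry \<Omega> x - seg_length g 0 1)"
      using assms(3) by (intro divide_left_mono) auto
    then show "ennreal (1 / dist_bdry \<Omega> (g t)) \<le> ennreal (1 / (dist_bdry \<Omega> x - seg_length g 0 1))"
      by (rule ennreal_leI)
  qed
  then show ?thesis by simp
qed

lemma nn_integral_Ioc_le_qh_length:
  assumes "admissible \<Omega> x y g"
  shows "(\<integral>\<^sup>+t. (ennreal (1 / dist_bdry \<Omega> (g t)) * indicator {0..1} t) * indicator {0<..1} t
      \<partial>interval_measure (arclength_fun g)) \<le> qh_length \<Omega> g"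
  unfolding line_integral_def by (intro nn_integral_mono) (auto simp: indicator_def)

lemma seg_length_less_of_qh_length_start:
  assumes "admissible \<Omega> x y g" "x \<in> \<Omega>"
    and "qh_length \<Omega> g < ennreal (real n / 2)"
  shows "seg_length g 0 1 < (2 ^ n - 1) * dist_bdry \<Omega> x"
proof (rule ccontr)
  assume "\<not> ?thesis"
  then have A: "(2 ^ n - 1) * dist_bdry \<Omega> x \<le> arclength_fun g 1 - arclength_fun g 0"
    by (simp add: arclength_fun_1 arclength_fun_0)
  have r: "rectifiable g" using admissible_rectifiable[OF assms(1)] .
  have pg: "continuous_on {0..1} g" using r by (simp add: rectifiable_def path_def)
  have "ennreal (real n / 2) \<le> (\<integral>\<^sup>+t. (ennreal (1 / dist_bdry \<Omega> (g t)) * indicator {0..1} t) * indicator {0<..1} t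
      \<partial>interval_measure (arclength_fun g))"
  proof (rule dyadic_chain_lower_bound_left[OF mono_arclength_fun[OF r] continuous_on_arclength_fun[OF r]
        borel_measurable_comp_indicator[OF pg borel_measurable_qh_weight] dist_bdry_pos[OF assms(2)] _ A])
    fix t assume t: "t \<in> {0<..(1::real)}"
    then have t': "t \<in> {0..1}" by auto
    have "dist_bdry \<Omega> (g t) \<le> dist_bdry \<Omega> x + arclength_fun g t - arclength_fun g 0"
      using dist_bdry_along_admissible(1)[OF assms(1) t'] by (simp add: arclength_fun_0)
    then have "1 / (dist_bdry \<Omega> x + arclength_fun g t - arclength_fun g 0) \<le> 1 / dist_bdry \<Omega> (g t)"
      using dist_bdry_along_admissible(4)[OF assms(1) t'] by (intro divide_left_mono) auto
    then show "ennreal (1 / (dist_bdry \<Omega> x + arclength_fun g t - arclength_fun g 0)) \<le>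
      ennreal (1 / dist_bdry \<Omega> (g t)) * indicator {0..1} t"
      using t' by (simp add: ennreal_leI)
  qed simp
  also have "\<dots> \<le> qh_length \<Omega> g" by (rule nn_integral_Ioc_le_qh_length[OF assms(1)])
  finally show False using assms(3) by simp
qed

lemma seg_length_less_of_qh_length_finish:
  assumes "admissible \<Omega> x y g" "y \<in> \<Omega>"
    and "qh_length \<Omega> g < ennreal (real n / 2)"
  shows "seg_length g 0 1 < (2 ^ n - 1) * dist_bdry \<Omega> y"
proof (rule ccontr)
  assume "\<not> ?thesis"
  then have A: "(2 ^ n - 1) * dist_bdry \<Omega> y \<le> arclength_fun g 1 - arclength_fun g 0"
    by (simp add: arclength_fun_1 arclength_fun_0)
  have r: "rectifiable g" using admissible_rectifiable[OF assms(1)] .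
  have pg: "continuous_on {0..1} g" using r by (simp add: rectifiable_def path_def)
  have "ennreal (real n / 2) \<le> (\<integral>\<^sup>+t. (ennreal (1 / dist_bdry \<Omega> (g t)) * indicator {0..1} t) * indicator {0<..1} t
      \<partial>interval_measure (arclength_fun g))"
  proof (rule dyadic_chain_lower_bound_right[OF mono_arclength_fun[OF r] continuous_on_arclength_fun[OF r]
        borel_measurable_comp_indicator[OF pg borel_measurable_qh_weight] dist_bdry_pos[OF assms(2)] _ A])
    fix t assume t: "t \<in> {0<..(1::real)}"
    then have t': "t \<in> {0..1}" by auto
    have "dist_bdry \<Omega> (g t) \<le> dist_bdry \<Omega> y + arclength_fun g 1 - arclength_fun g t"
      using dist_bdry_along_admissible(3)[OF assms(1) t'] by (simp add: arclength_fun_1)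
    then have "1 / (dist_bdry \<Omega> y + arclength_fun g 1 - arclength_fun g t) \<le> 1 / dist_bdry \<Omega> (g t)"
      using dist_bdry_along_admissible(4)[OF assms(1) t'] by (intro divide_left_mono) auto
    then show "ennreal (1 / (dist_bdry \<Omega> y + arclength_fun g 1 - arclength_fun g t)) \<le>
      ennreal (1 / dist_bdry \<Omega> (g t)) * indicator {0..1} t"
      using t' by (simp add: ennreal_leI)
  qed simp
  also have "\<dots> \<le> qh_length \<Omega> g" by (rule nn_integral_Ioc_le_qh_length[OF assms(1)])
  finally show False using assms(3) by simp
qed

lemma qh_dist_triangle:
  assumes "admissible \<Omega> x y g" "admissible \<Omega> y z h"
  shows "qh_dist \<Omega> x z \<le> qh_length \<Omega> g + qh_length \<Omega> h"
proof -
  have "qh_dist \<Omega> x z \<le> qh_length \<Omega> (g +++ h)" by (rule qh_dist_le_qh_length[OF admissible_join[OF assms]])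
  also have "\<dots> \<le> qh_length \<Omega> g + qh_length \<Omega> h"
    by (rule line_integral_joinpaths_le[OF admissible_rectifiable[OF assms(1)]
          admissible_rectifiable[OF assms(2)] _ borel_measurable_qh_weight])
      (use assms in \<open>simp add: admissible_def\<close>)
  finally show ?thesis .
qed

lemma quasiconvex_const_pos: "0 < L" using quasiconvex_const_ge_1 by simp

lemma quasiconvex_curve_qh_length_less:
  assumes x: "x \<in> \<Omega>" and y: "y \<in> \<Omega>" and r: "0 < r" "r \<le> 1"
    and xy: "dist x y < r * dist_bdry \<Omega> x / (2 * L)"
  obtains h where "admissible \<Omega> x y h" "qh_length \<Omega> h < ennreal r"
proof -
  define d where "d = dist_bdry \<Omega> x"
  have d: "0 < d" using dist_bdry_pos[OF x] by (simp add: d_def)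
  obtain h where h: "admissible \<Omega> x y h" "seg_length h 0 1 \<le> L * dist x y"
    using quasiconvex_curve[OF x y] by blast
  define l where "l = seg_length h 0 1"
  have l0: "0 \<le> l" by (simp add: l_def seg_length_nonneg)
  have "L * dist x y < L * (r * d / (2 * L))"
    using xy quasiconvex_const_pos by (intro mult_strict_left_mono) (auto simp: d_def)
  moreover have "r * d \<le> d" using r d by (simp add: mult_left_le_one_le)
  ultimately have l1: "l < r * d / 2" "l < d / 2"
    using h(2) quasiconvex_const_pos by (auto simp: l_def)
  have "qh_length \<Omega> h \<le> ennreal (l / (d - l))"
    using qh_length_upper_bound[OF h(1) x] l1 d by (simp add: l_def d_def)
  also have "l / (d - l) < r"
  proof -
    have "r * (d / 2) \<le> r * (d - l)" using l1 r by (intro mult_left_mono) auto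
    then have "l < r * (d - l)" using l1 by (simp add: field_simps)
    moreover have pos: "0 < d - l" using l1 d by linarith
    ultimately show ?thesis unfolding pos_divide_less_eq[OF pos] by simp
  qed
  then have "ennreal (l / (d - l)) < ennreal r" using l0 l1 r by (intro ennreal_lessI) auto
  finally show ?thesis using that h(1) by blast
qed

lemma d_ball_subset_qh_ball:
  assumes x: "x \<in> \<Omega>" and r: "0 < r" "r \<le> 1"
  shows "d_ball \<Omega> x (r * dist_bdry \<Omega> x / (2 * L)) \<subseteq> qh_ball \<Omega> x r"
proof
  fix y assume "y \<in> d_ball \<Omega> x (r * dist_bdry \<Omega> x / (2 * L))"
  then have y: "y \<in> \<Omega>" "dist x y < r * dist_bdry \<Omega> x / (2 * L)" by (auto simp: d_ball_def)
  then obtain h where "admissible \<Omega> x y h" "qh_length \<Omega> h < ennreal r"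
    using quasiconvex_curve_qh_length_less[OF x _ r] by blast
  then show "y \<in> qh_ball \<Omega> x r" using y(1) qh_dist_le_qh_length by (fastforce simp: qh_ball_def)
qed

lemma borel_domain: "\<Omega> \<in> sets borel"
proof -
  obtain T where T: "open T" "\<Omega> = closure \<Omega> \<inter> T" using oc by (auto simp: openin_open)
  then show ?thesis by (metis borel_closed borel_open closed_closure sets.Int)
qed

lemma openin_qh_ball: "openin (top_of_set \<Omega>) (qh_ball \<Omega> x r)"
  unfolding openin_euclidean_subtopology_iff
proof (intro conjI ballI qh_ball_subset)
  fix y assume y: "y \<in> qh_ball \<Omega> x r"
  then have yO: "y \<in> \<Omega>" and q: "qh_dist \<Omega> x y < ennreal r" by (auto simp: qh_ball_def)
  obtain g where g: "admissible \<Omega> x y g" "qh_length \<Omega> g < ennreal r" using qh_dist_lessE[OF q] by blast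
  obtain i where i: "qh_length \<Omega> g = ennreal i" "0 \<le> i" "i < r" using g(2)
    by (cases "qh_length \<Omega> g" rule: ennreal_cases) (auto simp: ennreal_less_iff)
  define \<delta> where "\<delta> = min (r - i) 1"
  have \<delta>: "0 < \<delta>" "\<delta> \<le> 1" "\<delta> \<le> r - i" using i by (auto simp: \<delta>_def)
  show "\<exists>e>0. \<forall>z\<in>\<Omega>. dist z y < e \<longrightarrow> z \<in> qh_ball \<Omega> x r"
  proof (intro exI[of _ "\<delta> * dist_bdry \<Omega> y / (2 * L)"] conjI ballI impI)
    show "0 < \<delta> * dist_bdry \<Omega> y / (2 * L)" using \<delta> dist_bdry_pos[OF yO] quasiconvex_const_pos by simp
    fix z assume z: "z \<in> \<Omega>" "dist z y < \<delta> * dist_bdry \<Omega> y / (2 * L)"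
    then obtain h where h: "admissible \<Omega> y z h" "qh_length \<Omega> h < ennreal \<delta>"
      using quasiconvex_curve_qh_length_less[OF yO z(1) \<delta>(1,2)] by (auto simp: dist_commute)
    have "qh_dist \<Omega> x z \<le> qh_length \<Omega> g + qh_length \<Omega> h" by (rule qh_dist_triangle[OF g(1) h(1)])
    also have "\<dots> < ennreal i + ennreal (r - i)"
      unfolding i(1) using h(2) \<delta>(3) by (simp add: ennreal_add_left_cancel_less ennreal_leI less_le_trans)
    also have "\<dots> = ennreal r" using i by (simp add: ennreal_plus[symmetric])
    finally show "z \<in> qh_ball \<Omega> x r" using z by (simp add: qh_ball_def)
  qed
qed

lemma qh_ball_sets: "qh_ball \<Omega> x r \<in> sets (restrict_space borel \<Omega>)"
proof -
  obtain T where T: "open T" "qh_ball \<Omega> x r = \<Omega> \<inter> T" using openin_qh_ball[of x r] by (auto simp: openin_open)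
  have "qh_ball \<Omega> x r \<in> sets borel" using T borel_domain by auto
  then show ?thesis using borel_domain qh_ball_subset by (subst sets_restrict_space_iff) auto
qed

lemma d_ball_sets: "d_ball \<Omega> x r \<in> sets (restrict_space borel \<Omega>)"
  using borel_domain by (subst sets_restrict_space_iff) (auto simp: d_ball_def)

lemma qh_ball_small_bounds:
  assumes x: "x \<in> \<Omega>" and s: "0 < s" "s \<le> 1/4" and y: "y \<in> qh_ball \<Omega> x s"
  shows "dist x y < 2 * s * dist_bdry \<Omega> x" "dist_bdry \<Omega> x / 2 \<le> dist_bdry \<Omega> y"
proof -
  define d where "d = dist_bdry \<Omega> x"
  have d: "0 < d" using dist_bdry_pos[OF x] by (simp add: d_def)
  have q: "qh_dist \<Omega> x y < ennreal s" using y by (simp add: qh_ball_def)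
  obtain g where g: "admissible \<Omega> x y g" "qh_length \<Omega> g < ennreal s" using qh_dist_lessE[OF q] by blast
  define l where "l = seg_length g 0 1"
  have l0: "0 \<le> l" by (simp add: l_def seg_length_nonneg)
  have "ennreal (l / (d + l)) < ennreal s" using qh_length_lower_bound[OF g(1) x] g(2) by (simp add: l_def d_def)
  then have "l / (d + l) < s" using l0 d by (simp add: ennreal_less_iff)
  then have "l < s * (d + l)" using l0 d by (simp add: pos_divide_less_eq)
  moreover have "s * l \<le> (1/4) * l" using s l0 by (intro mult_right_mono) auto
  moreover have "s * (d + l) = s * d + s * l" by (simp add: algebra_simps)
  moreover have "0 < s * d" using s d by simp
  ultimately have "l < 2 * (s * d)" by linarith
  then have "l < 2 * s * d" by (simp add: mult.assoc)
  have "dist x y \<le> l" using admissible_dist_le_length[OF g(1)] by (simp add: l_def)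
  show "dist x y < 2 * s * dist_bdry \<Omega> x" using \<open>l < 2 * s * d\<close> \<open>dist x y \<le> l\<close> by (simp add: d_def)
  have "d \<le> dist_bdry \<Omega> y + dist y x" using dist_bdry_lipschitz[of \<Omega> x y] by (simp add: d_def)
  moreover have "2 * s * d \<le> d / 2" using s d by simp
  ultimately show "dist_bdry \<Omega> x / 2 \<le> dist_bdry \<Omega> y"
    using \<open>l < 2 * s * d\<close> \<open>dist x y \<le> l\<close> by (simp add: d_def dist_commute)
qed

lemma qh_ball_bounds:
  assumes x: "x \<in> \<Omega>" and R: "0 < R" and y: "y \<in> qh_ball \<Omega> x R"
  shows "dist x y < 2 ^ nat \<lceil>2 * R\<rceil> * dist_bdry \<Omega> x"
    and "dist_bdry \<Omega> x / 2 ^ nat \<lceil>2 * R\<rceil> < dist_bdry \<Omega> y"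
proof -
  define n where "n = nat \<lceil>2 * R\<rceil>"
  have yO: "y \<in> \<Omega>" and q: "qh_dist \<Omega> x y < ennreal R" using y by (auto simp: qh_ball_def)
  obtain g where g: "admissible \<Omega> x y g" "qh_length \<Omega> g < ennreal R" using qh_dist_lessE[OF q] by blast
  have "R \<le> real n / 2" using R by (simp add: n_def) linarith
  then have g2: "qh_length \<Omega> g < ennreal (real n / 2)" using g(2) by (meson ennreal_leI less_le_trans)
  have l1: "seg_length g 0 1 < (2 ^ n - 1) * dist_bdry \<Omega> x"
    using seg_length_less_of_qh_length_start[OF g(1) x g2] .
  have l2: "seg_length g 0 1 < (2 ^ n - 1) * dist_bdry \<Omega> y"
    using seg_length_less_of_qh_length_finish[OF g(1) yO g2] .
  have dxy: "dist x y \<le> seg_length g 0 1" by (rule admissible_dist_le_length[OF g(1)])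
  show "dist x y < 2 ^ nat \<lceil>2 * R\<rceil> * dist_bdry \<Omega> x"
    using l1 dxy dist_bdry_pos[OF x] by (simp add: n_def algebra_simps)
  have "dist_bdry \<Omega> x < 2 ^ n * dist_bdry \<Omega> y"
    using dist_bdry_lipschitz[of \<Omega> x y] l2 dxy by (simp add: dist_commute algebra_simps)
  then show "dist_bdry \<Omega> x / 2 ^ nat \<lceil>2 * R\<rceil> < dist_bdry \<Omega> y"
    by (simp add: n_def pos_divide_less_eq mult.commute)
qed

end

lemma le_power_ceiling_log2: "0 < X \<Longrightarrow> X \<le> (2::real) ^ nat \<lceil>log 2 X\<rceil>"
proof -
  assume X: "0 < X"
  have "log 2 X \<le> real (nat \<lceil>log 2 X\<rceil>)" by linarith
  then have "2 powr (log 2 X) \<le> 2 powr real (nat \<lceil>log 2 X\<rceil>)" by (rule powr_mono) simp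
  then show ?thesis using X by (simp add: powr_realpow)
qed

lemma powr_neg_mult_powr: "0 < a \<Longrightarrow> 0 < b \<Longrightarrow> a powr (- c) * b powr c = (b / a) powr (c::real)"
  by (simp add: powr_minus_divide powr_divide)

locale qh_weighted = qh_domain \<Omega> L for \<Omega> :: "'a::complete_space set" and L :: real +
  fixes \<mu> :: "'a measure" and C :: real and \<alpha> :: real
  assumes borel: "sets \<mu> = sets (restrict_space borel \<Omega>)"
    and doubling: "doubling_global \<mu> \<Omega> (d_ball \<Omega>) C"
    and alpha: "\<alpha> > 0"
begin

abbreviation \<nu> :: "'a measure" where "\<nu> \<equiv> weighted_measure \<Omega> \<mu> \<alpha>"

lemma borel_measurable_weight: "(\<lambda>z. ennreal (dist_bdry \<Omega> z powr (- \<alpha>))) \<in> borel_measurable \<mu>"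
proof -
  have "dist_bdry \<Omega> \<in> borel_measurable borel" using continuous_on_dist_bdry
    by (rule borel_measurable_continuous_onI)
  then have "(\<lambda>z. ennreal (dist_bdry \<Omega> z powr (- \<alpha>))) \<in> borel_measurable borel" by measurable
  then have "(\<lambda>z. ennreal (dist_bdry \<Omega> z powr (- \<alpha>))) \<in> borel_measurable (restrict_space borel \<Omega>)"
    by (rule measurable_restrict_space1)
  then show ?thesis unfolding measurable_cong_sets[OF borel refl, where N=borel] .
qed

lemma sets_borel_domain: "S \<in> sets (restrict_space borel \<Omega>) \<Longrightarrow> S \<in> sets \<mu>" using borel by simp

lemma emeasure_weighted: "S \<in> sets \<mu> \<Longrightarrow> emeasure \<nu> S = (\<integral>\<^sup>+z. ennreal (dist_bdry \<Omega> z powr (- \<alpha>)) * indicator S z \<partial>\<mu>)"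
  unfolding weighted_measure_def by (rule emeasure_density[OF borel_measurable_weight])

lemma emeasure_weighted_le:
  assumes S: "S \<in> sets \<mu>" and m: "0 < m" and b: "\<And>z. z \<in> S \<Longrightarrow> m \<le> dist_bdry \<Omega> z"
  shows "emeasure \<nu> S \<le> ennreal (m powr (- \<alpha>)) * emeasure \<mu> S"
proof -
  have "emeasure \<nu> S \<le> (\<integral>\<^sup>+z. ennreal (m powr (- \<alpha>)) * indicator S z \<partial>\<mu>)"
    unfolding emeasure_weighted[OF S]
  proof (intro nn_integral_mono)
    fix z show "ennreal (dist_bdry \<Omega> z powr - \<alpha>) * indicator S z \<le> ennreal (m powr - \<alpha>) * indicator S z"
    proof (cases "z \<in> S")
      case True
      then have "dist_bdry \<Omega> z powr - \<alpha> \<le> m powr - \<alpha>" using b[OF True] m alpha by (intro powr_mono2') auto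
      then show ?thesis using True by (simp add: ennreal_leI)
    qed simp
  qed
  also have "\<dots> = ennreal (m powr (- \<alpha>)) * emeasure \<mu> S" by (rule nn_integral_cmult_indicator[OF S])
  finally show ?thesis .
qed

lemma emeasure_weighted_ge:
  assumes S: "S \<in> sets \<mu>" "S \<subseteq> \<Omega>" and b: "\<And>z. z \<in> S \<Longrightarrow> dist_bdry \<Omega> z \<le> M"
  shows "ennreal (M powr (- \<alpha>)) * emeasure \<mu> S \<le> emeasure \<nu> S"
proof -
  have "ennreal (M powr (- \<alpha>)) * emeasure \<mu> S = (\<integral>\<^sup>+z. ennreal (M powr (- \<alpha>)) * indicator S z \<partial>\<mu>)"
    by (rule nn_integral_cmult_indicator[OF S(1), symmetric])
  also have "\<dots> \<le> emeasure \<nu> S"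
    unfolding emeasure_weighted[OF S(1)]
  proof (intro nn_integral_mono)
    fix z show "ennreal (M powr - \<alpha>) * indicator S z \<le> ennreal (dist_bdry \<Omega> z powr - \<alpha>) * indicator S z"
    proof (cases "z \<in> S")
      case True
      then have "M powr - \<alpha> \<le> dist_bdry \<Omega> z powr - \<alpha>" using b[OF True] dist_bdry_pos[of z] S(2) alpha
        by (intro powr_mono2') auto
      then show ?thesis using True by (simp add: ennreal_leI)
    qed simp
  qed
  finally show ?thesis .
qed

lemma emeasure_d_ball_finite: "x \<in> \<Omega> \<Longrightarrow> 0 < \<rho> \<Longrightarrow> emeasure \<mu> (d_ball \<Omega> x \<rho>) < \<infinity>"
  using doubling by (auto simp: doubling_global_def)

lemma emeasure_d_ball_pos: "x \<in> \<Omega> \<Longrightarrow> 0 < \<rho> \<Longrightarrow> 0 < emeasure \<mu> (d_ball \<Omega> x \<rho>)"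
  using doubling[unfolded doubling_global_def, rule_format, of x "\<rho> / 2"] by auto

lemma emeasure_d_ball_doubling:
  "x \<in> \<Omega> \<Longrightarrow> 0 < \<rho> \<Longrightarrow> emeasure \<mu> (d_ball \<Omega> x (2 * \<rho>)) \<le> ennreal C * emeasure \<mu> (d_ball \<Omega> x \<rho>)"
  using doubling by (auto simp: doubling_global_def)

lemma doubling_const_pos: "0 < C"
proof (rule ccontr)
  assume "\<not> 0 < C"
  then have C0: "ennreal C = 0" by (simp add: ennreal_neg)
  obtain x where x: "x \<in> \<Omega>" using exists_two_points by blast
  have "0 < emeasure \<mu> (d_ball \<Omega> x (2 * 1))" using emeasure_d_ball_pos[OF x] by simp
  also have "\<dots> \<le> ennreal C * emeasure \<mu> (d_ball \<Omega> x 1)" using emeasure_d_ball_doubling[OF x, of 1] by simp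
  finally show False using C0 by simp
qed

lemma d_ball_sets_mu: "d_ball \<Omega> x r \<in> sets \<mu>" by (rule sets_borel_domain[OF d_ball_sets])

lemma emeasure_d_ball_mono: "a \<le> b \<Longrightarrow> emeasure \<mu> (d_ball \<Omega> x a) \<le> emeasure \<mu> (d_ball \<Omega> x b)"
  by (rule emeasure_mono[OF _ d_ball_sets_mu]) (auto simp: d_ball_def)

lemma emeasure_d_ball_doubling_iter:
  assumes x: "x \<in> \<Omega>" and \<rho>: "0 < \<rho>"
  shows "emeasure \<mu> (d_ball \<Omega> x (2 ^ k * \<rho>)) \<le> ennreal (C ^ k) * emeasure \<mu> (d_ball \<Omega> x \<rho>)"
proof (induction k)
  case 0 then show ?case by simp
next
  case (Suc k)
  have "emeasure \<mu> (d_ball \<Omega> x (2 ^ Suc k * \<rho>)) = emeasure \<mu> (d_ball \<Omega> x (2 * (2 ^ k * \<rho>)))"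
    by (simp add: mult.assoc)
  also have "\<dots> \<le> ennreal C * emeasure \<mu> (d_ball \<Omega> x (2 ^ k * \<rho>))" using emeasure_d_ball_doubling[OF x] \<rho> by simp
  also have "\<dots> \<le> ennreal C * (ennreal (C ^ k) * emeasure \<mu> (d_ball \<Omega> x \<rho>))"
    by (intro mult_left_mono Suc.IH) simp
  also have "\<dots> = ennreal (C ^ Suc k) * emeasure \<mu> (d_ball \<Omega> x \<rho>)"
    using doubling_const_pos by (simp add: ennreal_mult mult.assoc)
  finally show ?case .
qed

lemma emeasure_weighted_d_ball_ge:
  assumes x: "x \<in> \<Omega>" and \<rho>: "0 < \<rho>" "\<rho> \<le> dist_bdry \<Omega> x"
  shows "ennreal ((2 * dist_bdry \<Omega> x) powr (- \<alpha>)) * emeasure \<mu> (d_ball \<Omega> x \<rho>) \<le> emeasure \<nu> (d_ball \<Omega> x \<rho>)"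
proof (rule emeasure_weighted_ge)
  show "d_ball \<Omega> x \<rho> \<in> sets \<mu>" by (rule sets_borel_domain[OF d_ball_sets])
  show "d_ball \<Omega> x \<rho> \<subseteq> \<Omega>" by (auto simp: d_ball_def)
  fix z assume "z \<in> d_ball \<Omega> x \<rho>"
  then have "dist x z < \<rho>" by (simp add: d_ball_def)
  then show "dist_bdry \<Omega> z \<le> 2 * dist_bdry \<Omega> x" using dist_bdry_lipschitz[of \<Omega> z x] \<rho> by simp
qed

lemma emeasure_weighted_comparison:
  assumes x: "x \<in> \<Omega>" and S: "S \<in> sets \<mu>" "S \<subseteq> \<Omega>" and T: "T \<in> sets \<mu>" "d_ball \<Omega> x \<rho> \<subseteq> T"
    and \<rho>: "0 < \<rho>" "\<rho> \<le> dist_bdry \<Omega> x" and m: "0 < m"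
    and b: "\<And>y. y \<in> S \<Longrightarrow> m \<le> dist_bdry \<Omega> y \<and> dist x y < D"
    and k: "D \<le> 2 ^ k * \<rho>"
  shows "emeasure \<nu> S \<le> ennreal (m powr (- \<alpha>) * C ^ k * (2 * dist_bdry \<Omega> x) powr \<alpha>) * emeasure \<nu> T"
proof -
  define d where "d = dist_bdry \<Omega> x"
  have d: "0 < d" using dist_bdry_pos[OF x] by (simp add: d_def)
  have "emeasure \<nu> S \<le> ennreal (m powr (- \<alpha>)) * emeasure \<mu> S"
    using emeasure_weighted_le[OF S(1) m] b by blast
  also have "emeasure \<mu> S \<le> emeasure \<mu> (d_ball \<Omega> x D)"
    by (rule emeasure_mono[OF _ d_ball_sets_mu]) (use b S in \<open>auto simp: d_ball_def\<close>)
  also have "\<dots> \<le> emeasure \<mu> (d_ball \<Omega> x (2 ^ k * \<rho>))" by (rule emeasure_d_ball_mono[OF k])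
  also have "\<dots> \<le> ennreal (C ^ k) * emeasure \<mu> (d_ball \<Omega> x \<rho>)" by (rule emeasure_d_ball_doubling_iter[OF x \<rho>(1)])
  also have "emeasure \<mu> (d_ball \<Omega> x \<rho>) \<le> ennreal ((2 * d) powr \<alpha>) * emeasure \<nu> T"
  proof -
    have "emeasure \<mu> (d_ball \<Omega> x \<rho>) =
        ennreal ((2 * d) powr \<alpha>) * (ennreal ((2 * d) powr (- \<alpha>)) * emeasure \<mu> (d_ball \<Omega> x \<rho>))"
    proof -
      have "(2 * d) powr \<alpha> * (2 * d) powr (- \<alpha>) = 1" using d by (simp add: powr_minus_divide)
      then have "ennreal ((2 * d) powr \<alpha>) * ennreal ((2 * d) powr (- \<alpha>)) = 1"
        by (simp add: ennreal_mult[symmetric])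
      then show ?thesis by (simp add: mult.assoc[symmetric])
    qed
    also have "\<dots> \<le> ennreal ((2 * d) powr \<alpha>) * emeasure \<nu> (d_ball \<Omega> x \<rho>)"
      by (intro mult_left_mono emeasure_weighted_d_ball_ge[OF x \<rho>(1), unfolded d_def[symmetric]])
        (use \<rho> in \<open>auto simp: d_def\<close>)
    also have "\<dots> \<le> ennreal ((2 * d) powr \<alpha>) * emeasure \<nu> T"
      by (intro mult_left_mono emeasure_mono T(2)) (use T(1) in \<open>auto simp: weighted_measure_def\<close>)
    finally show ?thesis .
  qed
  finally have "emeasure \<nu> S \<le>
      ennreal (m powr (- \<alpha>)) * (ennreal (C ^ k) * (ennreal ((2 * d) powr \<alpha>) * emeasure \<nu> T))"
    by (simp add: mult_left_mono)
  also have "\<dots> = ennreal (m powr (- \<alpha>) * C ^ k * (2 * d) powr \<alpha>) * emeasure \<nu> T"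
    using doubling_const_pos d by (simp add: ennreal_mult mult.assoc)
  finally show ?thesis by (simp add: d_def)
qed

lemma qh_ball_sets_mu: "qh_ball \<Omega> x r \<in> sets \<mu>" by (rule sets_borel_domain[OF qh_ball_sets])

lemma emeasure_weighted_qh_ball_finite:
  assumes x: "x \<in> \<Omega>" and R: "0 < R"
  shows "emeasure \<nu> (qh_ball \<Omega> x R) < \<infinity>"
proof -
  define n where "n = nat \<lceil>2 * R\<rceil>"
  define d where "d = dist_bdry \<Omega> x"
  have d: "0 < d" using dist_bdry_pos[OF x] by (simp add: d_def)
  have b: "\<And>y. y \<in> qh_ball \<Omega> x R \<Longrightarrow> dist x y < 2 ^ n * d \<and> d / 2 ^ n < dist_bdry \<Omega> y"
    using qh_ball_bounds[OF x R] by (simp add: n_def d_def)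
  have A: "emeasure \<nu> (qh_ball \<Omega> x R) \<le> ennreal ((d / 2 ^ n) powr (- \<alpha>)) * emeasure \<mu> (qh_ball \<Omega> x R)"
    by (rule emeasure_weighted_le[OF qh_ball_sets_mu]) (use d b in \<open>auto intro: less_imp_le\<close>)
  have B: "emeasure \<mu> (qh_ball \<Omega> x R) \<le> emeasure \<mu> (d_ball \<Omega> x (2 ^ n * d))"
    by (rule emeasure_mono[OF _ d_ball_sets_mu]) (use b qh_ball_subset[of \<Omega> x R] in \<open>auto simp: d_ball_def\<close>)
  have "emeasure \<mu> (d_ball \<Omega> x (2 ^ n * d)) < \<infinity>" by (rule emeasure_d_ball_finite[OF x]) (use d in simp)
  then have "emeasure \<mu> (qh_ball \<Omega> x R) < \<infinity>" using B by simp
  then have "ennreal ((d / 2 ^ n) powr (- \<alpha>)) * emeasure \<mu> (qh_ball \<Omega> x R) < \<infinity>"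
    by (simp add: ennreal_mult_less_top)
  then show ?thesis using A by simp
qed

lemma emeasure_weighted_qh_ball_pos:
  assumes x: "x \<in> \<Omega>" and r: "0 < r"
  shows "0 < emeasure \<nu> (qh_ball \<Omega> x r)"
proof -
  define r' where "r' = min r 1"
  define d where "d = dist_bdry \<Omega> x"
  have d: "0 < d" using dist_bdry_pos[OF x] by (simp add: d_def)
  define \<rho> where "\<rho> = r' * d / (2 * L)"
  have r': "0 < r'" "r' \<le> 1" "r' \<le> r" using r by (auto simp: r'_def)
  have \<rho>: "0 < \<rho>" using r' d quasiconvex_const_pos by (simp add: \<rho>_def)
  have "\<rho> \<le> r' * d / 2" unfolding \<rho>_def using quasiconvex_const_ge_1 r' d by (intro divide_left_mono) auto
  also have "\<dots> \<le> d" using r' d by simp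
  finally have \<rho>d: "\<rho> \<le> d" .
  have "0 < ennreal ((2 * d) powr (- \<alpha>)) * emeasure \<mu> (d_ball \<Omega> x \<rho>)"
    using emeasure_d_ball_pos[OF x \<rho>] d by (simp add: ennreal_zero_less_mult_iff)
  also have "\<dots> \<le> emeasure \<nu> (d_ball \<Omega> x \<rho>)"
    using emeasure_weighted_d_ball_ge[OF x \<rho>] \<rho>d by (simp add: d_def)
  also have "\<dots> \<le> emeasure \<nu> (qh_ball \<Omega> x r)"
  proof (rule emeasure_mono)
    have "d_ball \<Omega> x \<rho> \<subseteq> qh_ball \<Omega> x r'" using d_ball_subset_qh_ball[OF x r'(1,2)] by (simp add: \<rho>_def d_def)
    also have "\<dots> \<subseteq> qh_ball \<Omega> x r" by (rule qh_ball_mono[OF r'(3)])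
    finally show "d_ball \<Omega> x \<rho> \<subseteq> qh_ball \<Omega> x r" .
    show "qh_ball \<Omega> x r \<in> sets \<nu>" using qh_ball_sets_mu by (simp add: weighted_measure_def)
  qed
  finally show ?thesis .
qed

lemma emeasure_weighted_qh_ball_doubling:
  assumes x: "x \<in> \<Omega>" and a: "0 < a" and c: "0 < c" "c \<le> 1" and k: "b \<le> 2 ^ k * c"
    and inner: "d_ball \<Omega> x (c * dist_bdry \<Omega> x) \<subseteq> qh_ball \<Omega> x r"
    and outer: "\<And>y. y \<in> qh_ball \<Omega> x s \<Longrightarrow>
      dist_bdry \<Omega> x / a \<le> dist_bdry \<Omega> y \<and> dist x y < b * dist_bdry \<Omega> x"
  shows "emeasure \<nu> (qh_ball \<Omega> x s) \<le> ennreal ((2 * a) powr \<alpha> * C ^ k) * emeasure \<nu> (qh_ball \<Omega> x r)"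
proof -
  define d where "d = dist_bdry \<Omega> x"
  have d: "0 < d" using dist_bdry_pos[OF x] by (simp add: d_def)
  have "emeasure \<nu> (qh_ball \<Omega> x s) \<le>
      ennreal ((d / a) powr (- \<alpha>) * C ^ k * (2 * d) powr \<alpha>) * emeasure \<nu> (qh_ball \<Omega> x r)"
    unfolding d_def
  proof (rule emeasure_weighted_comparison[OF x qh_ball_sets_mu qh_ball_subset qh_ball_sets_mu inner _ _ _ outer])
    show "0 < c * dist_bdry \<Omega> x" "c * dist_bdry \<Omega> x \<le> dist_bdry \<Omega> x" "0 < dist_bdry \<Omega> x / a"
      using c a d by (auto simp: d_def mult_left_le_one_le)
    show "b * dist_bdry \<Omega> x \<le> 2 ^ k * (c * dist_bdry \<Omega> x)"
      using mult_right_mono[OF k, of d] d by (simp add: d_def mult.assoc)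
  qed
  also have "(d / a) powr (- \<alpha>) * C ^ k * (2 * d) powr \<alpha> = (2 * a) powr \<alpha> * C ^ k"
  proof -
    have "(d / a) powr (- \<alpha>) * (2 * d) powr \<alpha> = ((2 * d) / (d / a)) powr \<alpha>"
      using d a by (intro powr_neg_mult_powr) auto
    also have "(2 * d) / (d / a) = 2 * a" using d a by simp
    finally show ?thesis by (simp add: algebra_simps)
  qed
  finally show ?thesis .
qed

lemma weighted_qh_doubling_small:
  assumes x: "x \<in> \<Omega>" and r: "0 < r" "r \<le> 1/8"
  shows "emeasure \<nu> (qh_ball \<Omega> x (2 * r))
    \<le> ennreal (4 powr \<alpha> * C ^ nat \<lceil>log 2 (8 * L)\<rceil>) * emeasure \<nu> (qh_ball \<Omega> x r)"
proof -
  let ?k = "nat \<lceil>log 2 (8 * L)\<rceil>"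
  have L: "0 < L" "1 \<le> L" using quasiconvex_const_pos quasiconvex_const_ge_1 .
  have "8 * L * (r / (2 * L)) \<le> 2 ^ ?k * (r / (2 * L))"
    using le_power_ceiling_log2[of "8 * L"] L r by (intro mult_right_mono) auto
  then have k: "4 * r \<le> 2 ^ ?k * (r / (2 * L))" using L by simp
  have c: "0 < r / (2 * L)" "r / (2 * L) \<le> 1" using L r by (auto simp: field_simps)
  have "emeasure \<nu> (qh_ball \<Omega> x (2 * r)) \<le> ennreal ((2 * 2) powr \<alpha> * C ^ ?k) * emeasure \<nu> (qh_ball \<Omega> x r)"
  proof (rule emeasure_weighted_qh_ball_doubling[OF x _ c k])
    show "d_ball \<Omega> x (r / (2 * L) * dist_bdry \<Omega> x) \<subseteq> qh_ball \<Omega> x r"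
      using d_ball_subset_qh_ball[OF x r(1)] r(2) by simp
    fix y assume "y \<in> qh_ball \<Omega> x (2 * r)"
    then show "dist_bdry \<Omega> x / 2 \<le> dist_bdry \<Omega> y \<and> dist x y < 4 * r * dist_bdry \<Omega> x"
      using qh_ball_small_bounds[OF x, of "2 * r" y] r by simp
  qed simp
  then show ?thesis by simp
qed

lemma weighted_qh_doubling_large:
  assumes "0 < R"
  shows "\<exists>K. \<forall>x\<in>\<Omega>. \<forall>r. 1/8 < r \<and> r \<le> R \<longrightarrow>
     emeasure \<nu> (qh_ball \<Omega> x (2 * r)) \<le> ennreal K * emeasure \<nu> (qh_ball \<Omega> x r)"
proof -
  define n where "n = nat \<lceil>2 * (2 * R)\<rceil>"
  define k where "k = nat \<lceil>log 2 (16 * L * 2 ^ n)\<rceil>"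
  have L: "0 < L" "1 \<le> L" using quasiconvex_const_pos quasiconvex_const_ge_1 .
  have "16 * L * 2 ^ n * (1 / (16 * L)) \<le> 2 ^ k * (1 / (16 * L))"
    using le_power_ceiling_log2[of "16 * L * 2 ^ n"] L unfolding k_def by (intro mult_right_mono) auto
  then have k: "2 ^ n \<le> 2 ^ k * (1 / (16 * L))" using L by simp
  have c: "0 < 1 / (16 * L)" "1 / (16 * L) \<le> 1" using L by auto
  show ?thesis
  proof (intro exI[of _ "(2 * 2 ^ n) powr \<alpha> * C ^ k"] ballI allI impI)
    fix x r assume x: "x \<in> \<Omega>" and r: "1/8 < r \<and> r \<le> R"
    show "emeasure \<nu> (qh_ball \<Omega> x (2 * r)) \<le> ennreal ((2 * 2 ^ n) powr \<alpha> * C ^ k) * emeasure \<nu> (qh_ball \<Omega> x r)"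
    proof (rule emeasure_weighted_qh_ball_doubling[OF x _ c k])
      have "d_ball \<Omega> x (1 / (16 * L) * dist_bdry \<Omega> x) \<subseteq> qh_ball \<Omega> x (1/8)"
        using d_ball_subset_qh_ball[OF x, of "1/8"] by simp
      also have "\<dots> \<subseteq> qh_ball \<Omega> x r" by (rule qh_ball_mono) (use r in simp)
      finally show "d_ball \<Omega> x (1 / (16 * L) * dist_bdry \<Omega> x) \<subseteq> qh_ball \<Omega> x r" .
      fix y assume "y \<in> qh_ball \<Omega> x (2 * r)"
      then have "y \<in> qh_ball \<Omega> x (2 * R)" using qh_ball_mono[of "2 * r" "2 * R" \<Omega> x] r by auto
      then show "dist_bdry \<Omega> x / 2 ^ n \<le> dist_bdry \<Omega> y \<and> dist x y < 2 ^ n * dist_bdry \<Omega> x"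
        using qh_ball_bounds[OF x _ \<open>y \<in> qh_ball \<Omega> x (2 * R)\<close>] assms by (simp add: n_def)
    qed simp
  qed
qed

lemma weighted_qh_doubling_bounded:
  assumes "0 < R"
  shows "\<exists>K. \<forall>x\<in>\<Omega>. \<forall>r. 0 < r \<and> r \<le> R \<longrightarrow>
     emeasure \<nu> (qh_ball \<Omega> x (2 * r)) \<le> ennreal K * emeasure \<nu> (qh_ball \<Omega> x r)"
proof -
  define K\<^sub>0 where "K\<^sub>0 = 4 powr \<alpha> * C ^ nat \<lceil>log 2 (8 * L)\<rceil>"
  obtain K\<^sub>1 where K\<^sub>1: "\<And>x r. x \<in> \<Omega> \<Longrightarrow> 1/8 < r \<Longrightarrow> r \<le> R \<Longrightarrow>
      emeasure \<nu> (qh_ball \<Omega> x (2 * r)) \<le> ennreal K\<^sub>1 * emeasure \<nu> (qh_ball \<Omega> x r)"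
    using weighted_qh_doubling_large[OF assms] by blast
  have "emeasure \<nu> (qh_ball \<Omega> x (2 * r)) \<le> ennreal (max K\<^sub>0 K\<^sub>1) * emeasure \<nu> (qh_ball \<Omega> x r)"
    if x: "x \<in> \<Omega>" and r: "0 < r" "r \<le> R" for x r
  proof -
    have max: "ennreal K * emeasure \<nu> (qh_ball \<Omega> x r) \<le> ennreal (max K\<^sub>0 K\<^sub>1) * emeasure \<nu> (qh_ball \<Omega> x r)"
      if "K \<le> max K\<^sub>0 K\<^sub>1" for K
      using that by (intro mult_right_mono ennreal_leI) auto
    show ?thesis
    proof (cases "r \<le> 1/8")
      case True
      then show ?thesis
        using weighted_qh_doubling_small[OF x r(1) True] max[of K\<^sub>0] by (simp add: K\<^sub>0_def)
    next
      case False
      then show ?thesis using K\<^sub>1[OF x _ r(2)] max[of K\<^sub>1] by simp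
    qed
  qed
  then show ?thesis by blast
qed

end

lemma doubling_uptoI:
  assumes "\<And>x r. x \<in> \<Omega> \<Longrightarrow> 0 < r \<Longrightarrow> 0 < emeasure \<nu> (B x r)"
    and "\<And>x r. x \<in> \<Omega> \<Longrightarrow> 0 < r \<Longrightarrow> emeasure \<nu> (B x r) < \<infinity>"
    and "\<And>x r. x \<in> \<Omega> \<Longrightarrow> 0 < r \<Longrightarrow> r \<le> R \<Longrightarrow> emeasure \<nu> (B x (2 * r)) \<le> ennreal C * emeasure \<nu> (B x r)"
  shows "doubling_upto \<nu> \<Omega> B R C"
  using assms by (simp add: doubling_upto_def)

theorem proposition7p3:
  fixes \<Omega> :: "'a::complete_space set"
    and L C\<^sub>\<mu> \<alpha> :: real
    and \<mu> :: "'a measure"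
  assumes qc: "quasiconvex L \<Omega>"
    and noncomplete: "\<not> complete \<Omega>"
    and open_in_completion: "openin (top_of_set (closure \<Omega>)) \<Omega>"
    and borel: "sets \<mu> = sets (restrict_space borel \<Omega>)"
    and doubling: "doubling_global \<mu> \<Omega> (d_ball \<Omega>) C\<^sub>\<mu>"
    and alpha: "\<alpha> > 0"
  shows "doubling_upto (weighted_measure \<Omega> \<mu> \<alpha>) \<Omega> (qh_ball \<Omega>) (1/8)
           (4 powr \<alpha> * C\<^sub>\<mu> ^ nat \<lceil>log 2 (8 * L)\<rceil>)
       \<and> (\<forall>R\<^sub>1 > 0. \<exists>C. doubling_upto (weighted_measure \<Omega> \<mu> \<alpha>) \<Omega> (qh_ball \<Omega>) R\<^sub>1 C)"
proof -
  interpret qh_weighted \<Omega> L \<mu> C\<^sub>\<mu> \<alpha>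
    by unfold_locales (use assms in auto)
  have "doubling_upto \<nu> \<Omega> (qh_ball \<Omega>) (1/8) (4 powr \<alpha> * C\<^sub>\<mu> ^ nat \<lceil>log 2 (8 * L)\<rceil>)"
    using emeasure_weighted_qh_ball_pos emeasure_weighted_qh_ball_finite weighted_qh_doubling_small
    by (rule doubling_uptoI)
  moreover have "\<exists>C. doubling_upto \<nu> \<Omega> (qh_ball \<Omega>) R\<^sub>1 C" if R\<^sub>1: "R\<^sub>1 > 0" for R\<^sub>1
  proof -
    obtain K where K: "\<And>x r. x \<in> \<Omega> \<Longrightarrow> 0 < r \<Longrightarrow> r \<le> R\<^sub>1 \<Longrightarrow>
        emeasure \<nu> (qh_ball \<Omega> x (2 * r)) \<le> ennreal K * emeasure \<nu> (qh_ball \<Omega> x r)"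
      using weighted_qh_doubling_bounded[OF R\<^sub>1] by blast
    have "doubling_upto \<nu> \<Omega> (qh_ball \<Omega>) R\<^sub>1 K"
      using emeasure_weighted_qh_ball_pos emeasure_weighted_qh_ball_finite K by (rule doubling_uptoI)
    then show ?thesis ..
  qed
  ultimately show ?thesis by blast
qed

end
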